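(* Let $\mathcal C\subseteq2^{[n]}$ be a code such that its polar complex $\Gamma(\mathcal C)$ is shellable. Then: (1) $\mathcal C$ has no weak bitflip local obstructions, i.e. there is no pair $(g,\tau)$ with $g\in(\mathbb Z_2)^n$, $\tau\in\Delta(g\cdot\mathcal C)$, $\tau\notin g\cdot\mathcal C$, and $\operatorname{link}_\tau\Delta(g\cdot\mathcal C)$ not contractible; (2) $\mathcal C$ has no sphere link obstructions, i.e. there is no non-maximal face $F\in\Gamma(\mathcal C)$ with $\operatorname{link}_F\Gamma(\mathcal C)$ neither collapsible nor equal to $\Gamma(2^{[n]\setminus\underline F})$; (3) $\mathcal C$ has no chamber obstructions, i.e. there is no maximal face $\sigma$ of $\mathrm{cham}(\mathcal C)$ for which there exist distinct $T_1\ne T_2\in\Gamma(\mathcal C)$ with $\operatorname{link}_{T_1}\Gamma(\mathcal C)=\operatorname{link}_{T_2}\Gamma(\mathcal C)=\Gamma(2^\sigma)$.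
   Context: A code is a subset $\mathcal C\subseteq2^{[n]}$. $(\mathbb Z_2)^n$ acts on $2^{[n]}$ with generator $e_i$ toggling membership of $i$; $g\cdot\mathcal C=\{g\cdot\sigma:\sigma\in\mathcal C\}$. $\Delta(\mathcal C)$ is the set of all subsets of codewords. Polar complex: vertex set $[n]\sqcup\{\bar1,\dots,\bar n\}$, $\Sigma(\sigma)=\sigma\sqcup\{\bar i:i\notin\sigma\}$, $\Gamma(\mathcal C)$ the complex of all subsets of $\Sigma(\sigma)$, $\sigma\in\mathcal C$. The support $\underline F$ of a face $F$ is the set of $i\in[n]$ with $i\in F$ or $\bar i\in F$. For $S\subseteq[n]$, $\Gamma(2^S)$ is the complex on $S\sqcup\{\bar i:i\in S\}$ whose faces are the subsets containing no pair $\{i,\bar i\}$ ($\Gamma(2^\emptyset)=\{\emptyset\}$). $\operatorname{link}_F\Delta=\{\nu\in\Delta:\nu\cap F=\emptyset,\nu\cup F\in\Delta\}$. Contractible means the geometric realization is contractible (so $\{\}$ and $\{\emptyset\}$, having empty realization, are not contractible). A free pair in $\Delta$ is $(\sigma,\tau)$ with $\tau$ a facet, $\sigma\subsetneq\tau$, $\sigma$ in no other facet; collapsing along $\sigma$ gives $\{\nu\in\Delta:\nu\not\supseteq\sigma\}$; $\Delta$ is collapsible if finitely many collapses yield the void complex $\{\}$. $\mathrm{cham}(\mathcal C)$ is the set of $\sigma\subseteq[n]$ such that some $T\in\Gamma(\mathcal C)$ has $\underline T=[n]\setminus\sigma$ and $\operatorname{link}_T\Gamma(\mathcal C)=\Gamma(2^\sigma)$.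 A pure $k$-dimensional complex is shellable if its facets have an ordering $F_1,\dots,F_t$ such that for each $i>1$, the set of all subsets of $F_i$ intersected with the set of all subsets of $F_1,\dots,F_{i-1}$ is pure of dimension $k-1$. *)

theory Defs
  imports "HOL-Analysis.Analysis"
begin

definition ground :: "nat \<Rightarrow> nat set" where
  "ground n = {1..n}"

(* Geometric realization of a complex with vertex type 'a, as a subspace of
   'a \<Rightarrow> real with the product topology (for finite complexes this is the
   usual Euclidean topology on the finitely many relevant coordinates). *)
definition realization :: "'a set set \<Rightarrow> ('a \<Rightarrow> real) set" where
  "realization K = {f. \<exists>\<sigma>\<in>K. finite \<sigma> \<and> (\<forall>v. 0 \<le> f v) \<and> (\<forall>v. v \<notin> \<sigma> \<longrightarrow> f v = 0)
                        \<and> sum f \<sigma> = 1}"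

definition contractible_cx :: "'a set set \<Rightarrow> bool" where
  "contractible_cx K \<longleftrightarrow> realization K \<noteq> {} \<and> contractible (realization K)"

definition link :: "'a set \<Rightarrow> 'a set set \<Rightarrow> 'a set set" where
  "link F K = {\<nu>\<in>K. \<nu> \<inter> F = {} \<and> \<nu> \<union> F \<in> K}"

definition facet :: "'a set set \<Rightarrow> 'a set \<Rightarrow> bool" where
  "facet K \<tau> \<longleftrightarrow> \<tau> \<in> K \<and> (\<forall>\<rho>\<in>K. \<tau> \<subseteq> \<rho> \<longrightarrow> \<rho> = \<tau>)"

definition free_pair :: "'a set set \<Rightarrow> 'a set \<Rightarrow> 'a set \<Rightarrow> bool" where
  "free_pair K \<sigma> \<tau> \<longleftrightarrow> facet K \<tau> \<and> \<sigma> \<subset> \<tau> \<and>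
     (\<forall>\<rho>. facet K \<rho> \<and> \<sigma> \<subseteq> \<rho> \<longrightarrow> \<rho> = \<tau>)"

definition collapse :: "'a set set \<Rightarrow> 'a set \<Rightarrow> 'a set set" where
  "collapse K \<sigma> = {\<nu>\<in>K. \<not> \<sigma> \<subseteq> \<nu>}"

inductive collapsible :: "'a set set \<Rightarrow> bool" where
  void: "collapsible {}"
| step: "free_pair K \<sigma> \<tau> \<Longrightarrow> collapsible (collapse K \<sigma>) \<Longrightarrow> collapsible K"

definition pure_dim :: "'a set set \<Rightarrow> int \<Rightarrow> bool" where
  "pure_dim K d \<longleftrightarrow> (\<forall>F. facet K F \<longrightarrow> int (card F) = d + 1)"

definition shellable :: "'a set set \<Rightarrow> bool" where
  "shellable K \<longleftrightarrow> (\<exists>k. pure_dim K k \<and>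
     (\<exists>Fs. distinct Fs \<and> set Fs = {F. facet K F} \<and>
        (\<forall>i. 0 < i \<and> i < length Fs \<longrightarrow>
           pure_dim (Pow (Fs ! i) \<inter> (\<Union>j<i. Pow (Fs ! j))) (k - 1))))"

(* codes: sets of subsets of [n]; Z_2^n acts by symmetric difference with g \<subseteq> [n] *)
definition is_code :: "nat \<Rightarrow> nat set set \<Rightarrow> bool" where
  "is_code n C \<longleftrightarrow> C \<subseteq> Pow (ground n)"

definition flip :: "nat set \<Rightarrow> nat set \<Rightarrow> nat set" where
  "flip g \<sigma> = (\<sigma> - g) \<union> (g - \<sigma>)"

definition act :: "nat set \<Rightarrow> nat set set \<Rightarrow> nat set set" where
  "act g C = flip g ` C"

definition Delta :: "nat set set \<Rightarrow> nat set set" where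
  "Delta C = {\<tau>. \<exists>\<sigma>\<in>C. \<tau> \<subseteq> \<sigma>}"

(* polar complex: vertex (i,True) is i, vertex (i,False) is \<bar>i *)
definition Sig :: "nat \<Rightarrow> nat set \<Rightarrow> (nat \<times> bool) set" where
  "Sig n \<sigma> = {(i, True) | i. i \<in> \<sigma>} \<union> {(i, False) | i. i \<in> ground n \<and> i \<notin> \<sigma>}"

definition polar :: "nat \<Rightarrow> nat set set \<Rightarrow> (nat \<times> bool) set set" where
  "polar n C = {F. \<exists>\<sigma>\<in>C. F \<subseteq> Sig n \<sigma>}"

definition supp :: "(nat \<times> bool) set \<Rightarrow> nat set" where
  "supp F = fst ` F"

definition polar_full :: "nat set \<Rightarrow> (nat \<times> bool) set set" where
  "polar_full S = {F. F \<subseteq> S \<times> UNIV \<and> (\<forall>i. \<not> ((i, True) \<in> F \<and> (i, False) \<in> F))}"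

definition cham :: "nat \<Rightarrow> nat set set \<Rightarrow> nat set set" where
  "cham n C = {\<sigma>. \<sigma> \<subseteq> ground n \<and> (\<exists>T\<in>polar n C. supp T = ground n - \<sigma> \<and>
                   link T (polar n C) = polar_full \<sigma>)}"

definition weak_bitflip_obstruction :: "nat \<Rightarrow> nat set set \<Rightarrow> nat set \<Rightarrow> nat set \<Rightarrow> bool" where
  "weak_bitflip_obstruction n C g \<tau> \<longleftrightarrow> g \<subseteq> ground n \<and> \<tau> \<in> Delta (act g C) \<and>
     \<tau> \<notin> act g C \<and> \<not> contractible_cx (link \<tau> (Delta (act g C)))"

definition sphere_link_obstruction :: "nat \<Rightarrow> nat set set \<Rightarrow> (nat \<times> bool) set \<Rightarrow> bool" where
  "sphere_link_obstruction n C F \<longleftrightarrow> F \<in> polar n C \<and> \<not> facet (polar n C) F \<and>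
     \<not> collapsible (link F (polar n C)) \<and> link F (polar n C) \<noteq> polar_full (ground n - supp F)"

definition chamber_obstruction :: "nat \<Rightarrow> nat set set \<Rightarrow> nat set \<Rightarrow> bool" where
  "chamber_obstruction n C \<sigma> \<longleftrightarrow> facet (cham n C) \<sigma> \<and>
     (\<exists>T1\<in>polar n C. \<exists>T2\<in>polar n C. T1 \<noteq> T2 \<and>
        link T1 (polar n C) = polar_full \<sigma> \<and> link T2 (polar n C) = polar_full \<sigma>)"

end

(*
  A shelling of the polar complex \<Gamma>(C) amounts to an order of the codewords in which each
  codeword X is separated from every earlier one by an earlier neighbour flip {k} X; the
  directions of these neighbours form the restriction set of X.  A signed count of faces shows
  that a codeword whose restriction set is everything inside a slice of the cube spans the whole
  subcube of that slice.

  The link of a face of \<Gamma>(C) is the polar complex of a slice of C, hence either all of \<Gamma>(2^V) or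
  collapsible facet by facet in reverse shelling order.  Two faces with link \<Gamma>(2^\<sigma>) give two
  subcubes over \<sigma>, and the last of their codewords has an earlier neighbour outside \<sigma>, which
  yields a chamber strictly containing \<sigma>.  Finally a link in \<Delta>(g C) is a union of simplices
  inheriting the shelling order; removing the last simplex is a homotopy equivalence, so the
  union is contractible.
*)

theory Submission
  imports Defs
begin

section \<open>Bit flips and shelling orders of codes\<close>

lemma flip_flip [simp]: "flip g (flip g X) = X"
  unfolding flip_def by auto

lemma flip_comm: "flip X Y = flip Y X"
  unfolding flip_def by auto

lemma flip_flip_eq: "flip a (flip b X) = flip (flip a b) X"
  unfolding flip_def by auto

lemma flip_flip_right [simp]: "flip (flip X Y) Y = X"
  unfolding flip_def by auto

lemma flip_singleton_neq [simp]: "flip {k} X \<noteq> X"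
  unfolding flip_def by auto

lemma flip_empty [simp]: "flip {} X = X"
  unfolding flip_def by auto

lemma flip_self [simp]: "flip X X = {}"
  unfolding flip_def by auto

lemma flip_singleton_mem: "k \<in> X \<Longrightarrow> flip {k} X = X - {k}"
  unfolding flip_def by auto

lemma flip_singleton_not_mem: "k \<notin> X \<Longrightarrow> flip {k} X = insert k X"
  unfolding flip_def by auto

lemma flip_subset_if_agree: "Y \<inter> B = X \<inter> B \<Longrightarrow> Z \<inter> B = X \<inter> B \<Longrightarrow> flip Y Z \<subseteq> - B"
  unfolding flip_def by blast

text \<open>A shelling of \<open>\<Gamma>(C)\<close> read off on codewords: \<open>\<Sigma>(X)\<close> meets the earlier facets in a pure
  codimension-one complex precisely when every earlier codeword is separated from \<open>X\<close> by an
  earlier neighbour of \<open>X\<close>.\<close>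

definition shelling_order :: "nat set set \<Rightarrow> (nat set \<Rightarrow> nat) \<Rightarrow> bool" where
  "shelling_order S pos \<longleftrightarrow> inj_on pos S \<and> (\<forall>X\<in>S. \<forall>Y\<in>S. pos Y < pos X \<longrightarrow>
      (\<exists>k. k \<in> flip Y X \<and> flip {k} X \<in> S \<and> pos (flip {k} X) < pos X))"

lemma shelling_orderD:
  assumes "shelling_order S pos" "X \<in> S" "Y \<in> S" "pos Y < pos X"
  obtains k where "k \<in> flip Y X" "flip {k} X \<in> S" "pos (flip {k} X) < pos X"
  using assms unfolding shelling_order_def by blast

lemma shelling_order_inj:
  "shelling_order S pos \<Longrightarrow> X \<in> S \<Longrightarrow> Y \<in> S \<Longrightarrow> pos X = pos Y \<Longrightarrow> X = Y"
  unfolding shelling_order_def inj_on_def by blast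

lemma shelling_order_Int:
  assumes "shelling_order S pos"
    and "\<And>X Y k. X \<in> S \<inter> Q \<Longrightarrow> Y \<in> S \<inter> Q \<Longrightarrow> k \<in> flip Y X \<Longrightarrow> flip {k} X \<in> Q"
  shows "shelling_order (S \<inter> Q) pos"
  unfolding shelling_order_def
proof (intro conjI ballI impI)
  show "inj_on pos (S \<inter> Q)"
    using assms(1) unfolding shelling_order_def by (meson inj_on_Int)
next
  fix X Y assume X: "X \<in> S \<inter> Q" and Y: "Y \<in> S \<inter> Q" and "pos Y < pos X"
  then obtain k where k: "k \<in> flip Y X" "flip {k} X \<in> S" "pos (flip {k} X) < pos X"
    using assms(1) shelling_orderD by blast
  with assms(2)[OF X Y k(1)]
  show "\<exists>k. k \<in> flip Y X \<and> flip {k} X \<in> S \<inter> Q \<and> pos (flip {k} X) < pos X"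
    by blast
qed

lemma shelling_order_agree_on:
  assumes "shelling_order S pos"
  shows "shelling_order {X\<in>S. X \<inter> A = X0 \<inter> A} pos"
proof -
  have "shelling_order (S \<inter> {X. X \<inter> A = X0 \<inter> A}) pos"
    by (rule shelling_order_Int[OF assms]) (auto simp: flip_def)
  then show ?thesis by (simp add: Collect_conj_eq)
qed

lemma shelling_order_Diff_last:
  assumes "shelling_order S pos" "\<forall>Y\<in>S. pos Y \<le> pos X"
  shows "shelling_order (S - {X}) pos"
  unfolding shelling_order_def
proof (intro conjI ballI impI)
  show "inj_on pos (S - {X})"
    using assms(1) unfolding shelling_order_def by (blast intro: inj_on_diff)
next
  fix X' Y' assume X': "X' \<in> S - {X}" and Y': "Y' \<in> S - {X}" and "pos Y' < pos X'"
  then obtain k where k: "k \<in> flip Y' X'" "flip {k} X' \<in> S" "pos (flip {k} X') < pos X'"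
    using assms(1) shelling_orderD by blast
  moreover have "flip {k} X' \<noteq> X" using k(3) assms(2) X' by force
  ultimately show "\<exists>k. k \<in> flip Y' X' \<and> flip {k} X' \<in> S - {X} \<and> pos (flip {k} X') < pos X'"
    by blast
qed

lemma exists_last:
  fixes pos :: "'a \<Rightarrow> nat"
  assumes "finite S" "S \<noteq> {}"
  obtains X where "X \<in> S" "\<forall>Y\<in>S. pos Y \<le> pos X"
proof -
  have "Max (pos ` S) \<in> pos ` S" using assms by simp
  then obtain X where "X \<in> S" "pos X = Max (pos ` S)" by auto
  with assms show thesis by (intro that) auto
qed

lemma earlier_than_last:
  assumes "shelling_order S pos" "X \<in> S" "\<forall>Y\<in>S. pos Y \<le> pos X" "Y \<in> S - {X}"
  shows "pos Y < pos X"
proof -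
  have "pos Y \<noteq> pos X" using assms shelling_order_inj[OF assms(1) _ assms(2)] by blast
  with assms(3,4) show ?thesis by fastforce
qed

lemma shelling_order_act:
  assumes "shelling_order C pos"
  shows "shelling_order (act g C) (\<lambda>Y. pos (flip g Y))"
  unfolding shelling_order_def
proof (intro conjI ballI impI)
  show "inj_on (\<lambda>Y. pos (flip g Y)) (act g C)"
    using assms unfolding shelling_order_def act_def inj_on_def by auto
next
  fix X' Y' assume "X' \<in> act g C" "Y' \<in> act g C" and lt: "pos (flip g Y') < pos (flip g X')"
  then obtain X Y where X: "X \<in> C" "X' = flip g X" and Y: "Y \<in> C" "Y' = flip g Y"
    unfolding act_def by auto
  obtain k where k: "k \<in> flip Y X" "flip {k} X \<in> C" "pos (flip {k} X) < pos X"
    using shelling_orderD[OF assms X(1) Y(1)] lt X Y by auto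
  have "flip Y' X' = flip Y X" "flip {k} X' = flip g (flip {k} X)"
    unfolding X Y flip_def by auto
  with k X(2) show "\<exists>k. k \<in> flip Y' X' \<and> flip {k} X' \<in> act g C
      \<and> pos (flip g (flip {k} X')) < pos (flip g X')"
    unfolding act_def by auto
qed

lemma shelling_order_link:
  assumes "shelling_order S pos"
  shows "shelling_order ((\<lambda>Y. Y - \<tau>) ` {Y\<in>S. \<tau> \<subseteq> Y}) (\<lambda>Z. pos (Z \<union> \<tau>))"
proof -
  let ?S1 = "{Y\<in>S. \<tau> \<subseteq> Y}"
  have "shelling_order (S \<inter> {Y. \<tau> \<subseteq> Y}) pos"
    by (rule shelling_order_Int[OF assms]) (auto simp: flip_def)
  then have S1: "shelling_order ?S1 pos" by (simp add: Collect_conj_eq)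
  have readd: "Y - \<tau> \<union> \<tau> = Y" if "Y \<in> ?S1" for Y
    using that by auto
  show ?thesis unfolding shelling_order_def
  proof (intro conjI ballI impI inj_onI)
    fix X' Y' assume "X' \<in> (\<lambda>Y. Y - \<tau>) ` ?S1" "Y' \<in> (\<lambda>Y. Y - \<tau>) ` ?S1"
      and "pos (X' \<union> \<tau>) = pos (Y' \<union> \<tau>)"
    then obtain X Y where "X \<in> ?S1" "X' = X - \<tau>" "Y \<in> ?S1" "Y' = Y - \<tau>"
      by blast
    with \<open>pos (X' \<union> \<tau>) = pos (Y' \<union> \<tau>)\<close> show "X' = Y'"
      using shelling_order_inj[OF S1] readd by metis
  next
    fix X' Y' assume X': "X' \<in> (\<lambda>Y. Y - \<tau>) ` ?S1" and Y': "Y' \<in> (\<lambda>Y. Y - \<tau>) ` ?S1"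
      and lt: "pos (Y' \<union> \<tau>) < pos (X' \<union> \<tau>)"
    obtain X where X: "X \<in> ?S1" "X' = X - \<tau>" using X' by blast
    obtain Y where Y: "Y \<in> ?S1" "Y' = Y - \<tau>" using Y' by blast
    have "pos Y < pos X" using lt readd[OF X(1)] readd[OF Y(1)] X(2) Y(2) by simp
    then obtain k where k: "k \<in> flip Y X" "flip {k} X \<in> ?S1" "pos (flip {k} X) < pos X"
      using shelling_orderD[OF S1 X(1) Y(1)] by blast
    have "k \<notin> \<tau>" using k(1) X(1) Y(1) unfolding flip_def by auto
    then have "k \<in> flip Y' X'" and k': "flip {k} X' = flip {k} X - \<tau>"
      using k(1) X(2) Y(2) unfolding flip_def by auto
    moreover have "flip {k} X' \<in> (\<lambda>Y. Y - \<tau>) ` ?S1" using k(2) k' by blast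
    moreover have "pos (flip {k} X' \<union> \<tau>) < pos (X' \<union> \<tau>)"
      using k(3) readd[OF k(2)] readd[OF X(1)] X(2) k' by simp
    ultimately show "\<exists>k. k \<in> flip Y' X' \<and> flip {k} X' \<in> (\<lambda>Y. Y - \<tau>) ` ?S1
        \<and> pos (flip {k} X' \<union> \<tau>) < pos (X' \<union> \<tau>)"
      by blast
  qed
qed

section \<open>Signed face counts\<close>

text \<open>The faces that \<open>\<Sigma>(X)\<close> adds to the shelling are those whose support contains the
  restriction set.\<close>

definition restriction :: "nat set \<Rightarrow> nat set set \<Rightarrow> (nat set \<Rightarrow> nat) \<Rightarrow> nat set \<Rightarrow> nat set" where
  "restriction V S pos X = {k\<in>V. flip {k} X \<in> S \<and> pos (flip {k} X) < pos X}"

text \<open>A pair \<open>(A, X \<inter> A)\<close> encodes the face of the polar complex over \<open>V\<close> with support \<open>A\<close> on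
  which \<open>X\<close> is read off; the signed count is the reduced Euler characteristic up to sign.\<close>

definition polar_faces :: "nat set \<Rightarrow> nat set set \<Rightarrow> (nat set \<times> nat set) set" where
  "polar_faces V S = {(A, X \<inter> A) | A X. A \<subseteq> V \<and> X \<in> S}"

definition signed_face_count :: "nat set \<Rightarrow> nat set set \<Rightarrow> int" where
  "signed_face_count V S = (\<Sum>p\<in>polar_faces V S. (-1) ^ card (fst p))"

lemma sum_supersets_neg_one_pow:
  assumes "finite V" "R \<subseteq> V"
  shows "(\<Sum>A | R \<subseteq> A \<and> A \<subseteq> V. (-1::int) ^ card A) = (if R = V then (-1) ^ card V else 0)"
proof (cases "R = V")
  case True
  then have "{A. R \<subseteq> A \<and> A \<subseteq> V} = {V}" by auto
  then show ?thesis using True by simp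
next
  case False
  then have "R \<subset> V" using assms by auto
  have fin: "finite {A. R \<subseteq> A \<and> A \<subseteq> V}" using assms(1) by (simp add: finite_Collect_subsets)
  have "card {A \<in> {A. R \<subseteq> A \<and> A \<subseteq> V}. even (card A)}
      = card {A \<in> {A. R \<subseteq> A \<and> A \<subseteq> V}. odd (card A)}"
    using card_subsupersets_even_odd[OF assms(1) \<open>R \<subset> V\<close>] by (simp add: conj_commute conj_left_commute)
  from sum_alternating_cancels[OF fin this] False show ?thesis by simp
qed

lemma restriction_subset_iff:
  assumes S: "shelling_order S pos" and D: "\<forall>X\<in>S. \<forall>Y\<in>S. flip X Y \<subseteq> V"
    and X: "X \<in> S" and A: "A \<subseteq> V"
  shows "restriction V S pos X \<subseteq> A \<longleftrightarrow> (\<forall>Y\<in>S. Y \<inter> A = X \<inter> A \<longrightarrow> pos X \<le> pos Y)"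
proof
  assume R: "restriction V S pos X \<subseteq> A"
  show "\<forall>Y\<in>S. Y \<inter> A = X \<inter> A \<longrightarrow> pos X \<le> pos Y"
  proof (intro ballI impI leI notI)
    fix Y assume Y: "Y \<in> S" and eq: "Y \<inter> A = X \<inter> A" and "pos Y < pos X"
    then obtain k where k: "k \<in> flip Y X" "flip {k} X \<in> S" "pos (flip {k} X) < pos X"
      using shelling_orderD[OF S X] by blast
    with D X Y have "k \<in> restriction V S pos X" unfolding restriction_def by blast
    with R k(1) eq show False unfolding flip_def by blast
  qed
next
  assume H: "\<forall>Y\<in>S. Y \<inter> A = X \<inter> A \<longrightarrow> pos X \<le> pos Y"
  show "restriction V S pos X \<subseteq> A"
  proof
    fix k assume k: "k \<in> restriction V S pos X"
    show "k \<in> A"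
    proof (rule ccontr)
      assume "k \<notin> A"
      then have "flip {k} X \<inter> A = X \<inter> A" unfolding flip_def by auto
      with H k show False unfolding restriction_def by force
    qed
  qed
qed

text \<open>Every face \<open>(A, P)\<close> is new exactly for the first codeword \<open>X\<close> with \<open>X \<inter> A = P\<close>, and
  that codeword has restriction set inside \<open>A\<close>.\<close>

lemma bij_betw_new_faces:
  assumes S: "shelling_order S pos" and D: "\<forall>X\<in>S. \<forall>Y\<in>S. flip X Y \<subseteq> V"
  shows "bij_betw (\<lambda>(X, A). (A, X \<inter> A))
           (Sigma S (\<lambda>X. {A. restriction V S pos X \<subseteq> A \<and> A \<subseteq> V})) (polar_faces V S)"
    (is "bij_betw ?h ?G _")
proof (rule bij_betwI')
  fix p q assume "p \<in> ?G" "q \<in> ?G"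
  then obtain X A Y B where pq: "p = (X, A)" "q = (Y, B)"
    and X: "X \<in> S" "restriction V S pos X \<subseteq> A" "A \<subseteq> V"
    and Y: "Y \<in> S" "restriction V S pos Y \<subseteq> B" "B \<subseteq> V"
    by auto
  show "(?h p = ?h q) = (p = q)"
  proof
    assume "?h p = ?h q"
    then have AB: "A = B" and eq: "X \<inter> A = Y \<inter> A" using pq by auto
    have "pos X \<le> pos Y" using restriction_subset_iff[OF S D X(1) X(3)] X(2) Y(1) eq by auto
    moreover have "pos Y \<le> pos X"
      using restriction_subset_iff[OF S D Y(1) Y(3)] Y(2) X(1) eq AB by auto
    ultimately show "p = q" using shelling_order_inj[OF S X(1) Y(1)] pq AB by simp
  qed simp
next
  fix p assume "p \<in> ?G"
  then show "?h p \<in> polar_faces V S" unfolding polar_faces_def by auto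
next
  fix q assume "q \<in> polar_faces V S"
  then obtain A X where q: "q = (A, X \<inter> A)" and A: "A \<subseteq> V" and X: "X \<in> S"
    unfolding polar_faces_def by blast
  obtain Y where Y: "Y \<in> S" "Y \<inter> A = X \<inter> A"
    and first: "\<forall>Z. Z \<in> S \<and> Z \<inter> A = X \<inter> A \<longrightarrow> pos Y \<le> pos Z"
    using ex_has_least_nat[of "\<lambda>Z. Z \<in> S \<and> Z \<inter> A = X \<inter> A" X pos] X by blast
  then have "restriction V S pos Y \<subseteq> A" using restriction_subset_iff[OF S D Y(1) A] by auto
  then have "(Y, A) \<in> ?G" using Y A by auto
  moreover have "q = ?h (Y, A)" using q Y by auto
  ultimately show "\<exists>p\<in>?G. q = ?h p" by blast
qed

lemma signed_face_count_shelling: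
  assumes S: "shelling_order S pos" and D: "\<forall>X\<in>S. \<forall>Y\<in>S. flip X Y \<subseteq> V"
    and "finite V" "finite S"
  shows "signed_face_count V S
       = (\<Sum>X\<in>S. if restriction V S pos X = V then (-1) ^ card V else 0)"
proof -
  define G where "G = Sigma S (\<lambda>X. {A. restriction V S pos X \<subseteq> A \<and> A \<subseteq> V})"
  define h where "h = (\<lambda>(X::nat set, A::nat set). (A, X \<inter> A))"
  have "signed_face_count V S = (\<Sum>p\<in>G. (-1::int) ^ card (fst (h p)))"
    unfolding signed_face_count_def G_def h_def
    by (rule sum.reindex_bij_betw[OF bij_betw_new_faces[OF S D], symmetric])
  also have "\<dots> = (\<Sum>(X, A)\<in>G. (-1::int) ^ card A)"
    unfolding h_def by (simp add: split_def)
  also have "\<dots> = (\<Sum>X\<in>S. \<Sum>A | restriction V S pos X \<subseteq> A \<and> A \<subseteq> V. (-1::int) ^ card A)"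
    unfolding G_def using assms(3,4)
    by (intro sum.Sigma[symmetric]) (auto intro: finite_subset[of _ "Pow V"])
  also have "\<dots> = (\<Sum>X\<in>S. if restriction V S pos X = V then (-1) ^ card V else 0)"
    using assms(3) by (intro sum.cong refl sum_supersets_neg_one_pow) (auto simp: restriction_def)
  finally show ?thesis .
qed

lemma sum_subset_pairs_neg_one_pow:
  assumes "finite V"
  shows "(\<Sum>(A, P) | P \<subseteq> A \<and> A \<subseteq> V. (-1::int) ^ card A) = (-1) ^ card V"
proof -
  have "{(A, P). P \<subseteq> A \<and> A \<subseteq> V} = prod.swap ` Sigma (Pow V) (\<lambda>P. {A. P \<subseteq> A \<and> A \<subseteq> V})"
    by (auto simp: image_iff)
  then have "(\<Sum>(A, P) | P \<subseteq> A \<and> A \<subseteq> V. (-1::int) ^ card A)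
      = (\<Sum>(P, A)\<in>Sigma (Pow V) (\<lambda>P. {A. P \<subseteq> A \<and> A \<subseteq> V}). (-1::int) ^ card A)"
    by (simp add: sum.reindex inj_on_def split_def)
  also have "\<dots> = (\<Sum>P\<in>Pow V. \<Sum>A | P \<subseteq> A \<and> A \<subseteq> V. (-1::int) ^ card A)"
    using assms by (intro sum.Sigma[symmetric]) (auto intro: finite_subset[of _ "Pow V"])
  also have "\<dots> = (\<Sum>P\<in>Pow V. if P = V then (-1) ^ card V else 0)"
    using assms by (intro sum.cong refl sum_supersets_neg_one_pow) auto
  finally show ?thesis using assms by simp
qed

lemma signed_face_count_cube_minus_vertex:
  assumes fV: "finite V" and S: "S = {flip W X0 | W. W \<subseteq> V \<and> W \<noteq> V}"
  shows "signed_face_count V S = 0"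
proof -
  let ?all = "{(A, P). P \<subseteq> A \<and> A \<subseteq> V}" and ?top = "(V, flip V X0 \<inter> V)"
  have missing: "flip W X0 \<inter> V \<noteq> flip V X0 \<inter> V" if W: "W \<subseteq> V" "W \<noteq> V" for W
  proof -
    obtain v where "v \<in> V" "v \<notin> W" using W by blast
    then have "v \<in> flip W X0 \<longleftrightarrow> v \<notin> flip V X0" unfolding flip_def by auto
    with \<open>v \<in> V\<close> show ?thesis by blast
  qed
  have faces: "polar_faces V S = ?all - {?top}"
  proof (intro equalityI subsetI)
    fix p assume "p \<in> polar_faces V S"
    then obtain A W where p: "p = (A, flip W X0 \<inter> A)" "A \<subseteq> V" "W \<subseteq> V" "W \<noteq> V"
      unfolding polar_faces_def S by blast
    then have "p \<noteq> ?top" using missing[OF p(3,4)] by auto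
    with p show "p \<in> ?all - {?top}" by auto
  next
    fix p assume p: "p \<in> ?all - {?top}"
    then obtain A P where AP: "p = (A, P)" "P \<subseteq> A" "A \<subseteq> V" by blast
    define W where "W = flip P (X0 \<inter> A)"
    have W: "W \<subseteq> A" "flip W X0 \<inter> A = P" using AP(2) unfolding W_def flip_def by auto
    have "W \<noteq> V"
    proof
      assume "W = V"
      then have "A = V" using W(1) AP(3) by blast
      with W(2) \<open>W = V\<close> AP(1) p show False by auto
    qed
    with W(1) AP(3) have "flip W X0 \<in> S" unfolding S by blast
    then show "p \<in> polar_faces V S" using AP W unfolding polar_faces_def by auto
  qed
  have "finite ?all" using fV by (auto intro: finite_subset[of _ "Pow V \<times> Pow V"])
  moreover have "?top \<in> ?all" by auto
  ultimately have "signed_face_count V S = (\<Sum>p\<in>?all. (-1::int) ^ card (fst p)) - (-1) ^ card V"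
    unfolding signed_face_count_def faces by (simp add: sum_diff1)
  then show ?thesis using sum_subset_pairs_neg_one_pow[OF fV] by (simp add: split_def)
qed

text \<open>Proper subcubes come by induction on \<open>|V|\<close> inside the slice through \<open>X0\<close>; if only the
  opposite vertex were missing, the signed face count would vanish, whereas the shelling makes
  it nonzero.\<close>

lemma subcube_if_full_restriction:
  assumes "finite V" "shelling_order S pos" "\<forall>X\<in>S. \<forall>Y\<in>S. flip X Y \<subseteq> V" "X0 \<in> S"
    "restriction V S pos X0 = V" "W \<subseteq> V"
  shows "flip W X0 \<in> S"
  using assms
proof (induction "card V" arbitrary: V S X0 W rule: less_induct)
  case (less V S X0 W)
  note fV = less.prems(1) and S = less.prems(2) and D = less.prems(3) and X0 = less.prems(4)
    and full = less.prems(5)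
  have proper: "flip W' X0 \<in> S" if W': "W' \<subseteq> V" "W' \<noteq> V" for W'
  proof -
    obtain a where a: "a \<in> V" "a \<notin> W'" using W' by blast
    let ?S = "{Y\<in>S. Y \<inter> {a} = X0 \<inter> {a}}"
    have D': "\<forall>X\<in>?S. \<forall>Y\<in>?S. flip X Y \<subseteq> V - {a}" using D unfolding flip_def by blast
    have "restriction (V - {a}) ?S pos X0 = V - {a}"
      using full unfolding restriction_def flip_def by auto
    moreover have "card (V - {a}) < card V" using card_Diff1_less[OF fV a(1)] .
    ultimately have "flip W' X0 \<in> ?S"
      using less.hyps[OF _ _ shelling_order_agree_on[OF S] D'] fV X0 a W' by auto
    then show ?thesis by simp
  qed
  show ?case
  proof (rule ccontr)
    assume notin: "flip W X0 \<notin> S"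
    then have "W = V" using proper less.prems(6) by blast
    have Seq: "S = {flip W' X0 | W'. W' \<subseteq> V \<and> W' \<noteq> V}"
    proof (intro equalityI subsetI)
      fix Y assume "Y \<in> S"
      moreover have "Y = flip (flip Y X0) X0" by simp
      ultimately show "Y \<in> {flip W' X0 | W'. W' \<subseteq> V \<and> W' \<noteq> V}"
        using D X0 notin \<open>W = V\<close> by (metis (mono_tags, lifting) mem_Collect_eq)
    qed (use proper in blast)
    then have fS: "finite S" using fV by (simp add: finite_image_set)
    have "X0 \<in> {X\<in>S. restriction V S pos X = V}" using X0 full by simp
    then have "card {X\<in>S. restriction V S pos X = V} > 0" using fS by (auto simp: card_gt_0_iff)
    moreover have "signed_face_count V S
        = of_nat (card {X\<in>S. restriction V S pos X = V}) * (-1) ^ card V"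
      using signed_face_count_shelling[OF S D fV fS] by (simp add: sum.inter_filter[OF fS, symmetric])
    ultimately show False using signed_face_count_cube_minus_vertex[OF fV Seq] by simp
  qed
qed

section \<open>Polar complexes and their links\<close>

lemma finite_ground [simp]: "finite (ground n)"
  by (simp add: ground_def)

lemma card_ground [simp]: "card (ground n) = n"
  by (simp add: ground_def)

lemma code_subset_ground: "is_code n C \<Longrightarrow> X \<in> C \<Longrightarrow> X \<subseteq> ground n"
  unfolding is_code_def by blast

lemma finite_code: "is_code n C \<Longrightarrow> finite C"
  unfolding is_code_def by (simp add: finite_subset)

definition sgn_face :: "nat set \<Rightarrow> nat set \<Rightarrow> (nat \<times> bool) set" where
  "sgn_face V X = (\<lambda>i. (i, i \<in> X)) ` V"

definition polar_over :: "nat set \<Rightarrow> nat set set \<Rightarrow> (nat \<times> bool) set set" where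
  "polar_over V S = {G. \<exists>X\<in>S. G \<subseteq> sgn_face V X}"

lemma Sig_eq_sgn_face: "X \<subseteq> ground n \<Longrightarrow> Sig n X = sgn_face (ground n) X"
  unfolding Sig_def sgn_face_def by auto

lemma polar_eq_polar_over: "is_code n C \<Longrightarrow> polar n C = polar_over (ground n) C"
  unfolding polar_def polar_over_def is_code_def using Sig_eq_sgn_face by blast

lemma sgn_face_subset_iff: "sgn_face V X \<subseteq> sgn_face V Y \<longleftrightarrow> X \<inter> V = Y \<inter> V"
  unfolding sgn_face_def by auto

lemma sgn_face_eq_iff: "sgn_face V X = sgn_face V Y \<longleftrightarrow> X \<inter> V = Y \<inter> V"
  unfolding sgn_face_def by auto

lemma sgn_face_Int: "sgn_face V X \<inter> sgn_face V Z = sgn_face (V - flip X Z) X"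
  unfolding sgn_face_def flip_def by auto

lemma card_sgn_face [simp]: "card (sgn_face V X) = card V"
  unfolding sgn_face_def by (rule card_image) (auto simp: inj_on_def)

lemma finite_sgn_face [simp]: "finite (sgn_face V X) \<longleftrightarrow> finite V"
  unfolding sgn_face_def by (auto simp: finite_image_iff inj_on_def)

lemma supp_sgn_face [simp]: "supp (sgn_face V X) = V"
  unfolding supp_def sgn_face_def by (auto simp: image_image)

lemma sgn_face_in_polar_full: "sgn_face V X \<in> polar_full V"
  unfolding sgn_face_def polar_full_def by auto

lemma polar_over_subset_polar_full: "polar_over V S \<subseteq> polar_full V"
  unfolding polar_over_def polar_full_def sgn_face_def by auto

text \<open>A face \<open>G\<close> of \<open>\<Gamma>(2\<^sup>V)\<close> lies in \<open>\<Sigma>(flip W X0)\<close> for \<open>W\<close> the coordinates where \<open>G\<close>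
  disagrees with \<open>X0\<close>.\<close>

lemma polar_over_eq_polar_full:
  assumes "\<And>W. W \<subseteq> V \<Longrightarrow> flip W X0 \<in> S"
  shows "polar_over V S = polar_full V"
proof (rule subset_antisym[OF polar_over_subset_polar_full subsetI])
  fix G assume G: "G \<in> polar_full V"
  define W where "W = {i\<in>V. (i, i \<notin> X0) \<in> G}"
  have "G \<subseteq> sgn_face V (flip W X0)"
  proof
    fix p assume p: "p \<in> G"
    obtain i b where ib: "p = (i, b)" by (cases p)
    have "i \<in> V" "\<not> ((i, True) \<in> G \<and> (i, False) \<in> G)"
      using G p ib unfolding polar_full_def by auto
    then have "b = (i \<in> flip W X0)"
      using p ib unfolding W_def flip_def by (cases b; cases "i \<in> X0") auto
    then show "p \<in> sgn_face V (flip W X0)"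
      using ib \<open>i \<in> V\<close> unfolding sgn_face_def by auto
  qed
  moreover have "flip W X0 \<in> S" by (rule assms) (auto simp: W_def)
  ultimately show "G \<in> polar_over V S" unfolding polar_over_def by blast
qed

lemma sgn_face_mono: "A \<subseteq> V \<Longrightarrow> sgn_face A X \<subseteq> sgn_face V X"
  unfolding sgn_face_def by auto

lemma sgn_face_subset_sgn_face_iff:
  "A \<subseteq> V \<Longrightarrow> sgn_face A X \<subseteq> sgn_face V Y \<longleftrightarrow> X \<inter> A = Y \<inter> A"
  unfolding sgn_face_def by auto

lemma sgn_face_Diff_Un: "A \<subseteq> V \<Longrightarrow> sgn_face (V - A) X \<union> sgn_face A X = sgn_face V X"
  unfolding sgn_face_def by auto

lemma sgn_face_Diff_disjoint: "sgn_face (V - A) X \<inter> sgn_face A Y = {}"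
  unfolding sgn_face_def by auto

lemma facet_polar_over_iff: "facet (polar_over V S) F \<longleftrightarrow> (\<exists>X\<in>S. F = sgn_face V X)"
proof
  assume F: "facet (polar_over V S) F"
  then have "F \<in> polar_over V S" unfolding facet_def by blast
  then obtain X where X: "X \<in> S" "F \<subseteq> sgn_face V X" unfolding polar_over_def by blast
  have "sgn_face V X \<in> polar_over V S" using X(1) unfolding polar_over_def by blast
  with F X(2) have "F = sgn_face V X" unfolding facet_def by blast
  with X(1) show "\<exists>X\<in>S. F = sgn_face V X" by blast
next
  assume "\<exists>X\<in>S. F = sgn_face V X"
  then obtain X where X: "X \<in> S" "F = sgn_face V X" by blast
  show "facet (polar_over V S) F" unfolding facet_def
  proof (intro conjI ballI impI)
    show "F \<in> polar_over V S" using X unfolding polar_over_def by blast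
  next
    fix G assume "G \<in> polar_over V S" "F \<subseteq> G"
    then obtain Y where Y: "G \<subseteq> sgn_face V Y" "sgn_face V X \<subseteq> sgn_face V Y"
      unfolding polar_over_def X(2) by blast
    then have "sgn_face V Y = F" unfolding X(2) sgn_face_subset_iff sgn_face_eq_iff by simp
    with Y(1) \<open>F \<subseteq> G\<close> show "G = F" by blast
  qed
qed

lemma facet_polar_iff:
  assumes "is_code n C"
  shows "facet (polar n C) F \<longleftrightarrow> (\<exists>X\<in>C. F = Sig n X)"
proof -
  have "(\<exists>X\<in>C. F = sgn_face (ground n) X) \<longleftrightarrow> (\<exists>X\<in>C. F = Sig n X)"
    using Sig_eq_sgn_face code_subset_ground[OF assms] by (intro bex_cong) auto
  then show ?thesis unfolding polar_eq_polar_over[OF assms] facet_polar_over_iff .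
qed

lemma card_Sig_Int:
  assumes "X \<subseteq> ground n" "Z \<subseteq> ground n"
  shows "card (Sig n X \<inter> Sig n Z) = n - card (flip X Z)"
proof -
  have "flip X Z \<subseteq> ground n" using assms unfolding flip_def by auto
  then show ?thesis
    using assms by (simp add: Sig_eq_sgn_face sgn_face_Int card_Diff_subset finite_subset)
qed

lemma Sig_Int_subset_Sig_iff:
  assumes "X \<subseteq> ground n" "Y \<subseteq> ground n" "Z \<subseteq> ground n"
  shows "Sig n X \<inter> Sig n Y \<subseteq> Sig n Z \<longleftrightarrow> flip X Z \<subseteq> flip X Y"
proof -
  have "Sig n X \<inter> Sig n Y \<subseteq> Sig n Z \<longleftrightarrow> X \<inter> (ground n - flip X Y) = Z \<inter> (ground n - flip X Y)"
    using assms by (simp add: Sig_eq_sgn_face sgn_face_Int sgn_face_subset_sgn_face_iff)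
  also have "\<dots> \<longleftrightarrow> flip X Z \<subseteq> flip X Y"
  proof
    assume eq: "X \<inter> (ground n - flip X Y) = Z \<inter> (ground n - flip X Y)"
    show "flip X Z \<subseteq> flip X Y"
    proof
      fix i assume i: "i \<in> flip X Z"
      then have "i \<in> ground n" using assms unfolding flip_def by auto
      with i eq show "i \<in> flip X Y" unfolding flip_def by blast
    qed
  next
    assume "flip X Z \<subseteq> flip X Y"
    then show "X \<inter> (ground n - flip X Y) = Z \<inter> (ground n - flip X Y)"
      unfolding flip_def by blast
  qed
  finally show ?thesis .
qed

lemma neighbour_of_ridge:
  assumes X: "X \<subseteq> ground n" and Y: "Y \<subseteq> ground n" and Z: "Z \<subseteq> ground n" and "X \<noteq> Z"
    and F: "Sig n X \<inter> Sig n Y \<subseteq> F" "F \<subseteq> Sig n X \<inter> Sig n Z" and card: "int (card F) = int n - 1"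
  obtains k where "Z = flip {k} X" "k \<in> flip Y X"
proof -
  have fin: "finite (Sig n X \<inter> Sig n Z)" using X by (simp add: Sig_eq_sgn_face)
  have XZ: "flip X Z \<subseteq> ground n" using X Z unfolding flip_def by auto
  have "card F \<le> n - card (flip X Z)"
    using card_mono[OF fin F(2)] card_Sig_Int[OF X Z] by simp
  moreover have "flip X Z \<noteq> {}" using \<open>X \<noteq> Z\<close> unfolding flip_def by auto
  then have "card (flip X Z) \<ge> 1" using XZ by (simp add: Suc_le_eq card_gt_0_iff finite_subset)
  moreover have "card (flip X Z) \<le> n" using card_mono[OF finite_ground XZ] by simp
  ultimately have one: "card (flip X Z) = 1" and "card F = card (Sig n X \<inter> Sig n Z)"
    using card card_Sig_Int[OF X Z] by linarith+
  then have "F = Sig n X \<inter> Sig n Z" using card_subset_eq[OF fin F(2)] by simp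
  from one obtain k where k: "flip X Z = {k}" by (rule card_1_singletonE)
  have "flip X Z \<subseteq> flip X Y" using \<open>F = Sig n X \<inter> Sig n Z\<close> F(1) Sig_Int_subset_Sig_iff[OF X Y Z] by blast
  then have "k \<in> flip Y X" using k flip_comm[of Y X] by simp
  moreover have "flip Z X = {k}" using k flip_comm[of Z X] by simp
  then have "Z = flip {k} X" using flip_flip_right[of Z X] by simp
  ultimately show thesis using that by blast
qed

lemma finite_facet_above:
  assumes "finite K" "G \<in> K"
  obtains F where "facet K F" "G \<subseteq> F"
  using finite_has_maximal2[OF assms] unfolding facet_def by blast

lemma Sig_inj: "X \<subseteq> ground n \<Longrightarrow> Y \<subseteq> ground n \<Longrightarrow> Sig n X = Sig n Y \<Longrightarrow> X = Y"
  by (simp add: Sig_eq_sgn_face sgn_face_eq_iff Int_absorb1 Int_absorb2)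

lemma distinct_list_index:
  assumes "distinct xs" "\<And>x. x \<in> A \<Longrightarrow> f x \<in> set xs" "inj_on f A"
  obtains idx where "inj_on idx A" "\<And>x. x \<in> A \<Longrightarrow> idx x < length xs \<and> xs ! idx x = f x"
    "\<And>x j. x \<in> A \<Longrightarrow> j < length xs \<Longrightarrow> xs ! j = f x \<Longrightarrow> idx x = j"
proof -
  define idx where "idx x = (SOME i. i < length xs \<and> xs ! i = f x)" for x
  have idx: "idx x < length xs \<and> xs ! idx x = f x" if "x \<in> A" for x
    unfolding idx_def using assms(2)[OF that] by (rule someI_ex[OF iffD1[OF in_set_conv_nth]])
  have eq: "idx x = j" if "x \<in> A" "j < length xs" "xs ! j = f x" for x j
    using idx[OF that(1)] that nth_eq_iff_index_eq[OF assms(1), of "idx x" j] by simp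
  have "inj_on idx A"
  proof (rule inj_onI)
    fix x y assume "x \<in> A" "y \<in> A" "idx x = idx y"
    then have "f x = f y" using idx by metis
    with \<open>x \<in> A\<close> \<open>y \<in> A\<close> show "x = y" using assms(3) by (simp add: inj_on_eq_iff)
  qed
  then show thesis by (rule that[OF _ idx eq])
qed

lemma shellable_polar_imp_shelling_order:
  assumes code: "is_code n C" and "shellable (polar n C)"
  obtains pos where "shelling_order C pos"
proof -
  obtain d Fs where pure: "pure_dim (polar n C) d" and "distinct Fs"
    and facets: "set Fs = {F. facet (polar n C) F}"
    and shell: "\<And>i. 0 < i \<Longrightarrow> i < length Fs \<Longrightarrow>
           pure_dim (Pow (Fs ! i) \<inter> (\<Union>j<i. Pow (Fs ! j))) (d - 1)"
    using assms(2) unfolding shellable_def by blast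
  have Cg: "\<And>X. X \<in> C \<Longrightarrow> X \<subseteq> ground n" using code_subset_ground[OF code] .
  have "Sig n X \<in> set Fs" if "X \<in> C" for X
    using that facets facet_polar_iff[OF code] by blast
  moreover have "inj_on (Sig n) C" using Sig_inj Cg by (meson inj_onI)
  ultimately obtain pos where "inj_on pos C" and pos: "\<And>X. X \<in> C \<Longrightarrow> pos X < length Fs \<and> Fs ! pos X = Sig n X"
    and pos_eq: "\<And>X j. X \<in> C \<Longrightarrow> j < length Fs \<Longrightarrow> Fs ! j = Sig n X \<Longrightarrow> pos X = j"
    using distinct_list_index[OF \<open>distinct Fs\<close>] by blast
  have "shelling_order C pos" unfolding shelling_order_def
  proof (intro conjI \<open>inj_on pos C\<close> ballI impI)
    fix X Y assume X: "X \<in> C" and Y: "Y \<in> C" and lt: "pos Y < pos X"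
    let ?K = "Pow (Fs ! pos X) \<inter> (\<Union>j<pos X. Pow (Fs ! j))"
    have "facet (polar n C) (Sig n X)" using facet_polar_iff[OF code] X by blast
    with pure have "int (card (Sig n X)) = d + 1" unfolding pure_dim_def by blast
    then have d: "d = int n - 1" using Cg[OF X] by (simp add: Sig_eq_sgn_face)
    have mem: "Sig n X \<inter> Sig n Y \<in> ?K" using pos[OF X] pos[OF Y] lt by auto
    have "finite (Sig n X)" using Cg[OF X] by (simp add: Sig_eq_sgn_face)
    then have "finite (Pow (Fs ! pos X))" using pos[OF X] by simp
    then have fin: "finite ?K" by (rule finite_Int[OF disjI1])
    obtain F where facet: "facet ?K F" and F: "Sig n X \<inter> Sig n Y \<subseteq> F"
      using finite_facet_above[OF fin mem] .
    have "pure_dim ?K (d - 1)" using shell[of "pos X"] pos[OF X] lt by simp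
    with facet have card: "int (card F) = int n - 1" unfolding pure_dim_def d by simp
    from facet have "F \<in> ?K" unfolding facet_def by (rule conjunct1)
    then obtain j where j: "j < pos X" "F \<subseteq> Fs ! j" "F \<subseteq> Sig n X" using pos[OF X] by auto
    have "Fs ! j \<in> set Fs" using j(1) pos[OF X] by simp
    then have "facet (polar n C) (Fs ! j)" using facets by simp
    then obtain Z where Z: "Z \<in> C" "Fs ! j = Sig n Z" using facet_polar_iff[OF code] by blast
    have "pos Z = j" using pos_eq[OF Z(1)] j(1) pos[OF X] Z(2) by simp
    then have "X \<noteq> Z" using j(1) by auto
    have FZ: "F \<subseteq> Sig n X \<inter> Sig n Z" using j(2,3) Z(2) by simp
    obtain k where "Z = flip {k} X" "k \<in> flip Y X"
      using neighbour_of_ridge[OF Cg[OF X] Cg[OF Y] Cg[OF Z(1)] \<open>X \<noteq> Z\<close> F FZ card] .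
    then show "\<exists>k. k \<in> flip Y X \<and> flip {k} X \<in> C \<and> pos (flip {k} X) < pos X"
      using Z(1) \<open>pos Z = j\<close> j(1) by blast
  qed
  then show thesis by (rule that)
qed

lemma link_sgn_face_polar_over:
  assumes "A \<subseteq> V"
  shows "link (sgn_face A X0) (polar_over V S) = polar_over (V - A) {X\<in>S. X \<inter> A = X0 \<inter> A}"
proof (intro equalityI subsetI)
  fix G assume "G \<in> link (sgn_face A X0) (polar_over V S)"
  then have disj: "G \<inter> sgn_face A X0 = {}" and "G \<union> sgn_face A X0 \<in> polar_over V S"
    unfolding link_def by auto
  then obtain Y where Y: "Y \<in> S" "G \<union> sgn_face A X0 \<subseteq> sgn_face V Y"
    unfolding polar_over_def by blast
  then have agree: "Y \<inter> A = X0 \<inter> A" using sgn_face_subset_sgn_face_iff[OF assms] by blast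
  then have "sgn_face A X0 = sgn_face A Y" by (simp add: sgn_face_eq_iff)
  then have "G \<subseteq> sgn_face (V - A) Y"
    using Y(2) disj sgn_face_Diff_Un[OF assms, of Y] by blast
  with Y(1) agree show "G \<in> polar_over (V - A) {X\<in>S. X \<inter> A = X0 \<inter> A}"
    unfolding polar_over_def by blast
next
  fix G assume "G \<in> polar_over (V - A) {X\<in>S. X \<inter> A = X0 \<inter> A}"
  then obtain Y where Y: "Y \<in> S" "Y \<inter> A = X0 \<inter> A" "G \<subseteq> sgn_face (V - A) Y"
    unfolding polar_over_def by blast
  then have face: "sgn_face A X0 = sgn_face A Y" by (simp add: sgn_face_eq_iff)
  have "G \<union> sgn_face A X0 \<subseteq> sgn_face V Y"
    using Y(3) sgn_face_Diff_Un[OF assms, of Y] face by blast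
  moreover have "G \<inter> sgn_face A X0 = {}"
    using Y(3) sgn_face_Diff_disjoint[of V A Y Y] face by blast
  ultimately show "G \<in> link (sgn_face A X0) (polar_over V S)"
    using Y(1) unfolding link_def polar_over_def by blast
qed

lemma polar_face_eq_sgn_face:
  assumes "is_code n C" "F \<in> polar n C"
  obtains X0 where "X0 \<in> C" "F = sgn_face (supp F) X0" "supp F \<subseteq> ground n"
proof -
  obtain X0 where X0: "X0 \<in> C" "F \<subseteq> sgn_face (ground n) X0"
    using assms unfolding polar_eq_polar_over[OF assms(1)] polar_over_def by blast
  then have "F = sgn_face (supp F) X0" "supp F \<subseteq> ground n"
    unfolding supp_def sgn_face_def by force+
  with X0(1) show thesis by (rule that)
qed

lemma link_polar_eq_polar_over:
  assumes "is_code n C" "X0 \<in> C" "A \<subseteq> ground n"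
  shows "link (sgn_face A X0) (polar n C) = polar_over (ground n - A) {X\<in>C. X \<inter> A = X0 \<inter> A}"
  using link_sgn_face_polar_over[OF assms(3)] polar_eq_polar_over[OF assms(1)] by simp

lemma restriction_face_only_in_last:
  assumes S: "shelling_order S pos" and D: "\<forall>X\<in>S. \<forall>Y\<in>S. flip X Y \<subseteq> V"
    and X: "X \<in> S" and last: "\<forall>Y\<in>S. pos Y \<le> pos X"
    and Y: "Y \<in> S" "sgn_face (restriction V S pos X) X \<subseteq> sgn_face V Y"
  shows "Y = X"
proof -
  let ?R = "restriction V S pos X"
  have RV: "?R \<subseteq> V" unfolding restriction_def by auto
  have "Y \<inter> ?R = X \<inter> ?R" using Y(2) sgn_face_subset_sgn_face_iff[OF RV] by blast
  then have "pos X \<le> pos Y" using restriction_subset_iff[OF S D X RV] Y(1) by auto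
  with last Y(1) show ?thesis using shelling_order_inj[OF S Y(1) X] by (meson le_antisym)
qed

lemma free_pair_last_facet:
  assumes S: "shelling_order S pos" and D: "\<forall>X\<in>S. \<forall>Y\<in>S. flip X Y \<subseteq> V"
    and X: "X \<in> S" and last: "\<forall>Y\<in>S. pos Y \<le> pos X" and R: "restriction V S pos X \<noteq> V"
  shows "free_pair (polar_over V S) (sgn_face (restriction V S pos X) X) (sgn_face V X)"
  unfolding free_pair_def
proof (intro conjI allI impI)
  let ?R = "restriction V S pos X"
  have RV: "?R \<subseteq> V" unfolding restriction_def by auto
  show "facet (polar_over V S) (sgn_face V X)" using X facet_polar_over_iff by blast
  obtain v where "v \<in> V" "v \<notin> ?R" using RV R by blast
  then have "(v, v \<in> X) \<in> sgn_face V X - sgn_face ?R X" unfolding sgn_face_def by auto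
  then show "sgn_face ?R X \<subset> sgn_face V X" using sgn_face_mono[OF RV] by blast
  fix \<rho> assume "facet (polar_over V S) \<rho> \<and> sgn_face ?R X \<subseteq> \<rho>"
  then obtain Y where "Y \<in> S" "\<rho> = sgn_face V Y" "sgn_face ?R X \<subseteq> \<rho>"
    using facet_polar_over_iff by blast
  then show "\<rho> = sgn_face V X" using restriction_face_only_in_last[OF S D X last] by blast
qed

lemma collapse_last_facet:
  assumes S: "shelling_order S pos" and D: "\<forall>X\<in>S. \<forall>Y\<in>S. flip X Y \<subseteq> V"
    and X: "X \<in> S" and last: "\<forall>Y\<in>S. pos Y \<le> pos X"
  defines "F \<equiv> sgn_face (restriction V S pos X) X"
  shows "collapse (polar_over V S) F = polar_over V (S - {X})"
proof (intro equalityI subsetI)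
  fix G assume "G \<in> collapse (polar_over V S) F"
  then obtain Y where Y: "Y \<in> S" "G \<subseteq> sgn_face V Y" and nF: "\<not> F \<subseteq> G"
    unfolding collapse_def polar_over_def by blast
  show "G \<in> polar_over V (S - {X})"
  proof (cases "Y = X")
    case False
    then show ?thesis using Y unfolding polar_over_def by blast
  next
    case True
    then obtain r where r: "r \<in> restriction V S pos X" "(r, r \<in> X) \<notin> G"
      using nF unfolding F_def sgn_face_def by auto
    have "G \<subseteq> sgn_face V (flip {r} X)"
      using Y(2) r(2) True unfolding sgn_face_def flip_def by auto
    moreover have "flip {r} X \<in> S - {X}" using r(1) unfolding restriction_def by auto
    ultimately show ?thesis unfolding polar_over_def by blast
  qed
next
  fix G assume "G \<in> polar_over V (S - {X})"
  then obtain Y where Y: "Y \<in> S" "Y \<noteq> X" "G \<subseteq> sgn_face V Y" unfolding polar_over_def by blast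
  then have "\<not> F \<subseteq> G" using restriction_face_only_in_last[OF S D X last] unfolding F_def by blast
  with Y show "G \<in> collapse (polar_over V S) F" unfolding collapse_def polar_over_def by blast
qed

text \<open>Collapse the facets in reverse shelling order, each along its restriction face, which is
  proper as no restriction set is full.\<close>

lemma polar_over_collapsible:
  assumes "finite S" "shelling_order S pos" "\<forall>X\<in>S. \<forall>Y\<in>S. flip X Y \<subseteq> V"
    "\<forall>X\<in>S. restriction V S pos X \<noteq> V"
  shows "collapsible (polar_over V S)"
  using assms
proof (induction "card S" arbitrary: S rule: less_induct)
  case (less S)
  note fS = less.prems(1) and S = less.prems(2) and D = less.prems(3) and R = less.prems(4)
  show ?case
  proof (cases "S = {}")
    case True
    then show ?thesis unfolding polar_over_def by (simp add: collapsible.void)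
  next
    case False
    then obtain X where X: "X \<in> S" and last: "\<forall>Y\<in>S. pos Y \<le> pos X"
      using exists_last[OF fS] by blast
    have "restriction V (S - {X}) pos Y \<noteq> V" if "Y \<in> S - {X}" for Y
    proof -
      have "restriction V (S - {X}) pos Y \<subseteq> restriction V S pos Y" unfolding restriction_def by auto
      moreover have "restriction V S pos Y \<subset> V" using R that unfolding restriction_def by auto
      ultimately show ?thesis by blast
    qed
    moreover have "card (S - {X}) < card S" using card_Diff1_less[OF fS X] .
    ultimately have "collapsible (polar_over V (S - {X}))"
      using less.hyps fS shelling_order_Diff_last[OF S last] D by auto
    then show ?thesis
      using free_pair_last_facet[OF S D X last R[rule_format, OF X]] collapse_last_facet[OF S D X last]
        collapsible.step by metis
  qed
qed

lemma no_sphere_link_obstruction: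
  assumes code: "is_code n C" and S: "shelling_order C pos"
  shows "\<not> sphere_link_obstruction n C F"
proof
  assume "sphere_link_obstruction n C F"
  then have F: "F \<in> polar n C" and nc: "\<not> collapsible (link F (polar n C))"
    and ne: "link F (polar n C) \<noteq> polar_full (ground n - supp F)"
    unfolding sphere_link_obstruction_def by auto
  obtain X0 where X0: "X0 \<in> C" "F = sgn_face (supp F) X0" "supp F \<subseteq> ground n"
    using polar_face_eq_sgn_face[OF code F] .
  define A where "A = supp F"
  define V where "V = ground n - A"
  define S' where "S' = {X\<in>C. X \<inter> A = X0 \<inter> A}"
  have link: "link F (polar n C) = polar_over V S'"
    using link_polar_eq_polar_over[OF code X0(1) X0(3)] unfolding X0(2)[symmetric] V_def S'_def A_def .
  have S': "shelling_order S' pos" unfolding S'_def by (rule shelling_order_agree_on[OF S])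
  have D: "\<forall>X\<in>S'. \<forall>Y\<in>S'. flip X Y \<subseteq> V"
    using code_subset_ground[OF code] unfolding S'_def V_def flip_def by blast
  have "finite S'" unfolding S'_def using finite_code[OF code] by simp
  show False
  proof (cases "\<exists>X\<in>S'. restriction V S' pos X = V")
    case True
    then obtain X where "X \<in> S'" "restriction V S' pos X = V" by blast
    then have "polar_over V S' = polar_full V"
      using subcube_if_full_restriction[OF _ S' D] by (intro polar_over_eq_polar_full) (simp add: V_def)
    then show False using ne link unfolding V_def A_def by simp
  next
    case False
    then have "collapsible (polar_over V S')"
      using polar_over_collapsible[OF \<open>finite S'\<close> S' D] by blast
    then show False using nc link by simp
  qed
qed

section \<open>Chambers\<close>

lemma subcube_in_cham:
  assumes code: "is_code n C" and X: "X \<in> C" and V: "V \<subseteq> ground n"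
    and cube: "\<And>W. W \<subseteq> V \<Longrightarrow> flip W X \<in> C"
  shows "V \<in> cham n C"
proof -
  let ?A = "ground n - V"
  define T where "T = sgn_face ?A X"
  have "T \<subseteq> Sig n X"
    using code_subset_ground[OF code X] unfolding T_def by (simp add: Sig_eq_sgn_face sgn_face_mono)
  then have T: "T \<in> polar n C" using X unfolding polar_def by blast
  have "ground n - ?A = V" using V by blast
  then have "link T (polar n C) = polar_over V {Y\<in>C. Y \<inter> ?A = X \<inter> ?A}"
    using link_polar_eq_polar_over[OF code X, of ?A] unfolding T_def by simp
  also have "\<dots> = polar_full V"
  proof (rule polar_over_eq_polar_full)
    fix W assume "W \<subseteq> V"
    moreover from this have "flip W X \<inter> ?A = X \<inter> ?A" unfolding flip_def by auto
    ultimately show "flip W X \<in> {Y\<in>C. Y \<inter> ?A = X \<inter> ?A}" using cube by simp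
  qed
  finally show ?thesis
    unfolding cham_def using V T by (intro CollectI conjI bexI[of _ T]) (simp_all add: T_def)
qed

lemma polar_over_eq_polar_full_imp_eq:
  assumes "X0 \<in> S" "polar_over V S = polar_full \<sigma>"
  shows "V = \<sigma>"
proof (intro equalityI subsetI)
  fix v assume "v \<in> V"
  then have "{(v, v \<in> X0)} \<in> polar_over V S" using assms(1) unfolding polar_over_def sgn_face_def by blast
  then show "v \<in> \<sigma>" using assms(2) unfolding polar_full_def by auto
next
  fix s assume "s \<in> \<sigma>"
  then have "{(s, True)} \<in> polar_over V S" using assms(2) unfolding polar_full_def by auto
  then show "s \<in> V" unfolding polar_over_def sgn_face_def by auto
qed

lemma subcube_of_link_eq_polar_full:
  assumes code: "is_code n C" and T: "T \<in> polar n C" and L: "link T (polar n C) = polar_full \<sigma>"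
  obtains X0 where "X0 \<in> C" "T = sgn_face (ground n - \<sigma>) X0" "\<sigma> \<subseteq> ground n"
    "\<And>W. W \<subseteq> \<sigma> \<Longrightarrow> flip W X0 \<in> C"
proof -
  obtain X0 where X0: "X0 \<in> C" "T = sgn_face (supp T) X0" "supp T \<subseteq> ground n"
    using polar_face_eq_sgn_face[OF code T] .
  define A where "A = supp T"
  let ?S = "{Y\<in>C. Y \<inter> A = X0 \<inter> A}"
  have "link T (polar n C) = polar_over (ground n - A) ?S"
    using link_polar_eq_polar_over[OF code X0(1) X0(3)] unfolding X0(2)[symmetric] A_def .
  from trans[OF sym[OF this] L] have LS: "polar_over (ground n - A) ?S = polar_full \<sigma>" .
  have "X0 \<in> ?S" using X0(1) by simp
  from polar_over_eq_polar_full_imp_eq[OF this LS] have \<sigma>: "\<sigma> = ground n - A" by (rule sym)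
  have ground: "ground n = \<sigma> \<union> A" using X0(3) \<sigma> unfolding A_def by blast
  have cube: "flip W X0 \<in> C" if W: "W \<subseteq> \<sigma>" for W
  proof -
    have "sgn_face \<sigma> (flip W X0) \<in> polar_over \<sigma> ?S"
      using LS sgn_face_in_polar_full \<sigma> by simp
    then obtain Y where Y: "Y \<in> C" "Y \<inter> A = X0 \<inter> A" "sgn_face \<sigma> (flip W X0) \<subseteq> sgn_face \<sigma> Y"
      unfolding polar_over_def by blast
    have "flip W X0 \<inter> \<sigma> = Y \<inter> \<sigma>" using Y(3) sgn_face_subset_iff by blast
    moreover have "flip W X0 \<inter> A = Y \<inter> A" using Y(2) W \<sigma> unfolding flip_def by auto
    ultimately have "flip W X0 \<inter> ground n = Y \<inter> ground n"
      unfolding ground by (simp add: Int_Un_distrib)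
    moreover have "flip W X0 \<subseteq> ground n" "Y \<subseteq> ground n"
      using code_subset_ground[OF code] X0(1) Y(1) W \<sigma> unfolding flip_def by auto
    ultimately have "flip W X0 = Y" by (simp add: Int_absorb2)
    with Y(1) show ?thesis by simp
  qed
  have "T = sgn_face (ground n - \<sigma>) X0"
    using X0(2,3) \<sigma> unfolding A_def by (simp add: Diff_Diff_Int Int_absorb1)
  with X0(1) \<sigma> cube show thesis by (intro that) auto
qed

text \<open>Within the slice of \<open>C\<close> through \<open>X\<close> that is fixed outside \<open>V\<close>, the restriction set of
  \<open>X\<close> is all of \<open>V\<close>.\<close>

lemma cham_if_earlier_neighbours:
  assumes code: "is_code n C" and S: "shelling_order C pos" and X: "X \<in> C" and V: "V \<subseteq> ground n"
    and earlier: "\<And>j. j \<in> V \<Longrightarrow> flip {j} X \<in> C \<and> pos (flip {j} X) < pos X"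
  shows "V \<in> cham n C"
proof -
  let ?slice = "{Y\<in>C. Y \<inter> - V = X \<inter> - V}"
  have D: "\<forall>Y\<in>?slice. \<forall>Y'\<in>?slice. flip Y Y' \<subseteq> V"
  proof (intro ballI)
    fix Y Y' assume "Y \<in> ?slice" "Y' \<in> ?slice"
    then show "flip Y Y' \<subseteq> V" using flip_subset_if_agree[of Y "- V" X Y'] by simp
  qed
  have "flip {j} X \<in> ?slice \<and> pos (flip {j} X) < pos X" if "j \<in> V" for j
    using earlier[OF that] that unfolding flip_def by auto
  then have full: "restriction V ?slice pos X = V" unfolding restriction_def by auto
  have "finite V" using finite_subset[OF V finite_ground] .
  show ?thesis
  proof (rule subcube_in_cham[OF code X V])
    fix W assume "W \<subseteq> V"
    with subcube_if_full_restriction[OF \<open>finite V\<close> shelling_order_agree_on[OF S, of "- V" X] D _ full]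
    show "flip W X \<in> C" using X by simp
  qed
qed

text \<open>Let \<open>X\<close> be the last codeword of two subcubes over \<open>\<sigma>\<close> whose bases differ outside
  \<open>\<sigma>\<close>. The vertex of the second subcube agreeing with \<open>X\<close> on \<open>\<sigma>\<close> comes earlier, so \<open>X\<close> has
  an earlier neighbour in some direction \<open>k \<notin> \<sigma>\<close>; then all neighbours of \<open>X\<close> in directions
  \<open>\<sigma> \<union> {k}\<close> come earlier, and the subcube over \<open>\<sigma> \<union> {k}\<close> through \<open>X\<close> lies in the code.\<close>

lemma cham_extension:
  assumes code: "is_code n C" and S: "shelling_order C pos" and \<sigma>: "\<sigma> \<subseteq> ground n"
    and cubeX: "\<And>W. W \<subseteq> \<sigma> \<Longrightarrow> flip W X \<in> C" and cubeZ: "\<And>W. W \<subseteq> \<sigma> \<Longrightarrow> flip W Z \<in> C"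
    and differ: "X \<inter> (ground n - \<sigma>) \<noteq> Z \<inter> (ground n - \<sigma>)"
    and last: "\<And>W. W \<subseteq> \<sigma> \<Longrightarrow> pos (flip W X) \<le> pos X \<and> pos (flip W Z) \<le> pos X"
  obtains k where "k \<in> ground n - \<sigma>" "\<sigma> \<union> {k} \<in> cham n C"
proof -
  let ?A = "ground n - \<sigma>"
  have XC: "X \<in> C" using cubeX[of "{}"] by simp
  have ZC: "Z \<in> C" using cubeZ[of "{}"] by simp
  define D where "D = flip X Z \<inter> ?A"
  define X' where "X' = flip D X"
  have "flip X' Z \<subseteq> \<sigma>"
  proof
    fix i assume i: "i \<in> flip X' Z"
    then have "i \<in> ground n"
      using code_subset_ground[OF code XC] code_subset_ground[OF code ZC]
      unfolding X'_def D_def flip_def by auto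
    with i show "i \<in> \<sigma>" unfolding X'_def D_def flip_def by auto
  qed
  then have X'C: "X' \<in> C" and "pos X' \<le> pos X"
    using cubeZ[of "flip X' Z"] last[of "flip X' Z"] by simp_all
  moreover have "X' \<noteq> X" using differ unfolding X'_def D_def flip_def by auto
  then have "pos X' \<noteq> pos X" using shelling_order_inj[OF S X'C XC] by blast
  ultimately have "pos X' < pos X" by simp
  then obtain k where "k \<in> flip X' X" and k: "flip {k} X \<in> C" "pos (flip {k} X) < pos X"
    by (rule shelling_orderD[OF S XC X'C])
  moreover have "flip X' X = D" unfolding X'_def by simp
  ultimately have kA: "k \<in> ?A" unfolding D_def by blast
  let ?V = "\<sigma> \<union> {k}"
  have nb: "flip {j} X \<in> C \<and> pos (flip {j} X) < pos X" if "j \<in> ?V" for j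
  proof (cases "j = k")
    case False
    with that have "{j} \<subseteq> \<sigma>" by simp
    then have "flip {j} X \<in> C" "pos (flip {j} X) \<le> pos X" using cubeX last by blast+
    moreover have "pos (flip {j} X) \<noteq> pos X"
      using shelling_order_inj[OF S \<open>flip {j} X \<in> C\<close> XC] by auto
    ultimately show ?thesis by simp
  qed (use k in simp)
  have "?V \<in> cham n C"
    by (rule cham_if_earlier_neighbours[OF code S XC _ nb]) (use \<sigma> kA in blast)
  with kA show thesis by (rule that)
qed

lemma no_chamber_obstruction:
  assumes code: "is_code n C" and S: "shelling_order C pos"
  shows "\<not> chamber_obstruction n C \<sigma>"
proof
  assume "chamber_obstruction n C \<sigma>"
  then obtain T1 T2 where fac: "facet (cham n C) \<sigma>" and T: "T1 \<in> polar n C" "T2 \<in> polar n C"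
    and "T1 \<noteq> T2" and L: "link T1 (polar n C) = polar_full \<sigma>" "link T2 (polar n C) = polar_full \<sigma>"
    unfolding chamber_obstruction_def by blast
  let ?A = "ground n - \<sigma>"
  obtain X1 where X1: "X1 \<in> C" "T1 = sgn_face ?A X1" "\<sigma> \<subseteq> ground n"
    "\<And>W. W \<subseteq> \<sigma> \<Longrightarrow> flip W X1 \<in> C"
    using subcube_of_link_eq_polar_full[OF code T(1) L(1)] by blast
  obtain X2 where X2: "X2 \<in> C" "T2 = sgn_face ?A X2" "\<sigma> \<subseteq> ground n"
    "\<And>W. W \<subseteq> \<sigma> \<Longrightarrow> flip W X2 \<in> C"
    using subcube_of_link_eq_polar_full[OF code T(2) L(2)] by blast
  have differ: "X1 \<inter> ?A \<noteq> X2 \<inter> ?A" using \<open>T1 \<noteq> T2\<close> X1(2) X2(2) by (simp add: sgn_face_eq_iff)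
  have cubes: "flip W Y \<in> C" if "Y \<in> {X1, X2}" "W \<subseteq> \<sigma>" for Y W using that X1(4) X2(4) by blast
  let ?U = "\<Union>Y\<in>{X1, X2}. (\<lambda>W. flip W Y) ` Pow \<sigma>"
  have "finite \<sigma>" using finite_subset[OF X1(3) finite_ground] .
  then have "finite ?U" by simp
  moreover have "?U \<noteq> {}" by auto
  ultimately obtain X where "X \<in> ?U" and last: "\<forall>Y\<in>?U. pos Y \<le> pos X"
    by (rule exists_last)
  then obtain Xa W1 where Xa: "Xa \<in> {X1, X2}" and W1: "W1 \<subseteq> \<sigma>" and X: "X = flip W1 Xa" by blast
  obtain Xb where Xb: "Xb \<in> {X1, X2}" "Xa \<inter> ?A \<noteq> Xb \<inter> ?A" using Xa differ by blast
  have inU: "flip W Y \<in> ?U" if "Y \<in> {X1, X2}" "W \<subseteq> \<sigma>" for Y W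
    by (rule UN_I[OF that(1)], rule imageI) (simp add: that(2))
  have cubeX: "flip W X \<in> ?U" if "W \<subseteq> \<sigma>" for W
  proof -
    have "flip W W1 \<subseteq> \<sigma>" using that W1 unfolding flip_def by auto
    from inU[OF Xa this] show ?thesis unfolding X flip_flip_eq .
  qed
  have UC: "?U \<subseteq> C" using cubes by auto
  obtain k where "k \<in> ?A" "\<sigma> \<union> {k} \<in> cham n C"
  proof (rule cham_extension[OF code S X1(3)])
    show "flip W X \<in> C" if "W \<subseteq> \<sigma>" for W using cubeX[OF that] UC by blast
    show "flip W Xb \<in> C" if "W \<subseteq> \<sigma>" for W using cubes[OF Xb(1) that] .
    have "X \<inter> ?A = Xa \<inter> ?A" using W1 unfolding X flip_def by auto
    with Xb(2) show "X \<inter> ?A \<noteq> Xb \<inter> ?A" by simp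
    show "pos (flip W X) \<le> pos X \<and> pos (flip W Xb) \<le> pos X" if "W \<subseteq> \<sigma>" for W
      using last cubeX[OF that] inU[OF Xb(1) that] by blast
  qed
  moreover have "\<sigma> \<subseteq> \<sigma> \<union> {k}" by blast
  ultimately show False using fac unfolding facet_def by blast
qed

section \<open>Unions of geometric simplices\<close>

lemma continuous_map_coordinate:
  "continuous_map (euclidean :: ('a \<Rightarrow> real) topology) euclideanreal (\<lambda>f. f v)"
  by (metis continuous_map_product_projection euclidean_product_topology iso_tuple_UNIV_I)

lemma continuous_map_into_functions:
  "continuous_map Z (euclidean :: ('a \<Rightarrow> real) topology) h \<longleftrightarrow>
     (\<forall>v. continuous_map Z euclideanreal (\<lambda>z. h z v))"
  by (metis continuous_map_componentwise_UNIV euclidean_product_topology)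

lemma continuous_map_fst_interval:
  "continuous_map (prod_topology (top_of_set {0..1::real}) Y) euclideanreal fst"
  using continuous_map_fst continuous_map_into_fulltopology by blast

lemma continuous_map_snd_coordinate:
  "continuous_map (prod_topology X (top_of_set (P :: ('a \<Rightarrow> real) set))) euclideanreal (\<lambda>z. snd z v)"
proof -
  have "continuous_map (top_of_set P) euclideanreal (\<lambda>f. f v)"
    by (rule continuous_map_from_subtopology[OF continuous_map_coordinate])
  then show ?thesis using continuous_map_compose[OF continuous_map_snd] unfolding o_def by blast
qed

lemma continuous_map_Min:
  assumes "finite K" "K \<noteq> {}" "\<And>k. k \<in> K \<Longrightarrow> continuous_map Z euclideanreal (g k)"
  shows "continuous_map Z euclideanreal (\<lambda>z. Min ((\<lambda>k. g k z) ` K))"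
  using assms
proof (induction K rule: finite_ne_induct)
  case (singleton x)
  then show ?case by simp
next
  case (insert x F)
  then have "(\<lambda>z. Min ((\<lambda>k. g k z) ` insert x F)) = (\<lambda>z. min (g x z) (Min ((\<lambda>k. g k z) ` F)))"
    by (simp add: Min_insert)
  then show ?case using insert by (simp add: continuous_map_real_min)
qed

lemma continuous_map_extend_by_identity:
  fixes P Q :: "('a \<Rightarrow> real) set" and H :: "real \<times> ('a \<Rightarrow> real) \<Rightarrow> 'a \<Rightarrow> real"
  assumes "closed P" "closed Q"
    and cont: "\<And>v. continuous_map (prod_topology (top_of_set {0..1}) (top_of_set P)) euclideanreal
                     (\<lambda>z. H z v)"
    and Hin: "\<And>t f. t \<in> {0..1} \<Longrightarrow> f \<in> P \<Longrightarrow> H (t, f) \<in> P \<union> Q"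
    and Hfix: "\<And>t f. t \<in> {0..1} \<Longrightarrow> f \<in> P \<Longrightarrow> f \<in> Q \<Longrightarrow> H (t, f) = f"
  shows "continuous_map (prod_topology (top_of_set {0..1}) (top_of_set (P \<union> Q))) (top_of_set (P \<union> Q))
           (\<lambda>z. if snd z \<in> P then H z else snd z)"
proof -
  define h where "h z = (if snd z \<in> P then H z else snd z)" for z
  define Z where "Z = prod_topology (top_of_set {0..1::real}) (top_of_set (P \<union> Q))"
  define T where "T b = (if b then {0..1::real} \<times> P else {0..1} \<times> Q)" for b
  have tZ: "topspace Z = {0..1} \<times> (P \<union> Q)" unfolding Z_def by simp
  have "closedin Z ({0..1} \<times> P)" "closedin Z ({0..1} \<times> Q)"
    unfolding Z_def closedin_prod_Times_iff using assms(1,2) by (auto simp: closedin_closed)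
  then have closed: "closedin Z (T b)" for b unfolding T_def by simp
  have "subtopology Z ({0..1} \<times> P) = prod_topology (top_of_set {0..1}) (top_of_set P)"
    "subtopology Z ({0..1} \<times> Q) = prod_topology (top_of_set {0..1}) (top_of_set Q)"
    unfolding Z_def subtopology_Times subtopology_subtopology by (simp_all add: Int_absorb1 inf.absorb2 Un_Int_eq)
  then have sub: "subtopology Z (T b) = prod_topology (top_of_set {0..1}) (top_of_set (if b then P else Q))"
    for b unfolding T_def by simp
  have "continuous_map Z euclideanreal (\<lambda>z. h z v)" for v
  proof (rule pasting_lemma_closed[where I = "{True, False}" and T = T
        and f = "\<lambda>b z. if b then H z v else snd z v"])
    fix b :: bool
    show "continuous_map (subtopology Z (T b)) euclideanreal (\<lambda>z. if b then H z v else snd z v)"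
      using cont[of v] continuous_map_snd_coordinate[of "top_of_set {0..1::real}" Q v]
      unfolding sub by (cases b) simp_all
  next
    fix b c :: bool and z
    assume "z \<in> topspace Z \<inter> T b \<inter> T c"
    then show "(if b then H z v else snd z v) = (if c then H z v else snd z v)"
      using Hfix[of "fst z" "snd z"] unfolding T_def by (cases z) (auto split: if_splits)
  next
    fix z assume "z \<in> topspace Z"
    then show "\<exists>b. b \<in> {True, False} \<and> z \<in> T b \<and> h z v = (if b then H z v else snd z v)"
      unfolding tZ T_def h_def by (cases z) auto
  qed (use closed in auto)
  moreover have "h z \<in> P \<union> Q" if "z \<in> topspace Z" for z
    using that Hin unfolding tZ h_def by (cases z) auto
  ultimately show ?thesis
    unfolding Z_def h_def continuous_map_in_subtopology continuous_map_into_functions by auto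
qed

lemma homotopy_equivalent_deformation:
  fixes P Q :: "('a \<Rightarrow> real) set" and H :: "real \<times> ('a \<Rightarrow> real) \<Rightarrow> 'a \<Rightarrow> real"
  assumes "closed P" "closed Q"
    and "\<And>v. continuous_map (prod_topology (top_of_set {0..1}) (top_of_set P)) euclideanreal
               (\<lambda>z. H z v)"
    and H0: "\<And>f. f \<in> P \<Longrightarrow> H (0, f) = f"
    and Hin: "\<And>t f. t \<in> {0..1} \<Longrightarrow> f \<in> P \<Longrightarrow> H (t, f) \<in> P \<union> Q"
    and H1: "\<And>f. f \<in> P \<Longrightarrow> H (1, f) \<in> Q"
    and Hfix: "\<And>t f. t \<in> {0..1} \<Longrightarrow> f \<in> P \<Longrightarrow> f \<in> Q \<Longrightarrow> H (t, f) = f"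
  shows "top_of_set (P \<union> Q) homotopy_equivalent_space top_of_set Q"
proof -
  define h where "h z = (if snd z \<in> P then H z else snd z)" for z
  have ch: "continuous_map (prod_topology (top_of_set {0..1}) (top_of_set (P \<union> Q))) (top_of_set (P \<union> Q)) h"
    unfolding h_def using continuous_map_extend_by_identity[OF assms(1-3) Hin Hfix] .
  define r where "r f = h (1, f)" for f
  have "homotopic_with (\<lambda>x. True) (top_of_set (P \<union> Q)) (top_of_set (P \<union> Q)) id r"
    using ch H0 unfolding r_def h_def by (subst homotopic_with) auto
  then have hom: "homotopic_with (\<lambda>x. True) (top_of_set (P \<union> Q)) (top_of_set (P \<union> Q)) r id"
    using homotopic_with_sym by blast
  have "continuous_map (top_of_set (P \<union> Q)) (prod_topology (top_of_set {0..1::real}) (top_of_set (P \<union> Q)))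
      (\<lambda>f. (1, f))"
    by (intro continuous_map_pairedI) (auto simp: continuous_map_id)
  then have "continuous_map (top_of_set (P \<union> Q)) (top_of_set (P \<union> Q)) r"
    using continuous_map_compose[OF _ ch] unfolding r_def o_def by blast
  moreover have "r f \<in> Q" if "f \<in> P \<union> Q" for f using that H1 unfolding r_def h_def by auto
  ultimately have "continuous_map (top_of_set (P \<union> Q)) (top_of_set Q) r"
    unfolding continuous_map_in_subtopology by auto
  moreover have "continuous_map (top_of_set Q) (top_of_set (P \<union> Q)) id"
    unfolding continuous_map_in_subtopology by (auto intro: continuous_map_from_subtopology)
  moreover have "\<forall>x\<in>topspace (top_of_set Q). r (id x) = x"
    using Hfix unfolding r_def h_def by simp
  ultimately have "retraction_maps (top_of_set (P \<union> Q)) (top_of_set Q) r id"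
    unfolding retraction_maps_def by blast
  with hom show ?thesis using deformation_retract_imp_homotopy_equivalent_space by blast
qed

definition simplex_set :: "'a set \<Rightarrow> ('a \<Rightarrow> real) set" where
  "simplex_set \<sigma> = {f. (\<forall>v. 0 \<le> f v) \<and> (\<forall>v. v \<notin> \<sigma> \<longrightarrow> f v = 0) \<and> sum f \<sigma> = 1}"

lemma closed_simplex_set:
  assumes "finite \<sigma>"
  shows "closed (simplex_set \<sigma>)"
proof -
  have c1: "closedin euclidean {f::'a \<Rightarrow> real. 0 \<le> f v \<and> (v \<notin> \<sigma> \<longrightarrow> f v = 0)}" for v
  proof -
    have "{x::real. 0 \<le> x \<and> (v \<notin> \<sigma> \<longrightarrow> x = 0)} = (if v \<in> \<sigma> then {0..} else {0})" by auto
    then have "closed {x::real. 0 \<le> x \<and> (v \<notin> \<sigma> \<longrightarrow> x = 0)}" by simp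
    from closedin_continuous_map_preimage[OF continuous_map_coordinate this[unfolded closed_closedin], of v]
    show ?thesis by simp
  qed
  have "continuous_map (euclidean :: ('a \<Rightarrow> real) topology) euclideanreal (\<lambda>f. sum f \<sigma>)"
    using assms by (intro continuous_map_sum continuous_map_coordinate)
  from closedin_continuous_map_preimage[OF this, of "{1}"]
  have c2: "closedin euclidean {f::'a \<Rightarrow> real. sum f \<sigma> = 1}" by (simp add: closed_closedin[symmetric])
  have "closed ((\<Inter>v. {f::'a \<Rightarrow> real. 0 \<le> f v \<and> (v \<notin> \<sigma> \<longrightarrow> f v = 0)}) \<inter> {f. sum f \<sigma> = 1})"
    using c1 c2 unfolding closed_closedin by (intro closedin_Int closedin_Inter) auto
  moreover have "simplex_set \<sigma> = (\<Inter>v. {f. 0 \<le> f v \<and> (v \<notin> \<sigma> \<longrightarrow> f v = 0)}) \<inter> {f. sum f \<sigma> = 1}"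
    unfolding simplex_set_def by auto
  ultimately show ?thesis by simp
qed

lemma simplex_set_mono:
  assumes "\<sigma> \<subseteq> \<rho>" "finite \<rho>"
  shows "simplex_set \<sigma> \<subseteq> simplex_set \<rho>"
proof
  fix f assume f: "f \<in> simplex_set \<sigma>"
  have "sum f \<rho> = sum f \<sigma>"
    using f assms by (intro sum.mono_neutral_right) (auto simp: simplex_set_def)
  then show "f \<in> simplex_set \<rho>" using f assms unfolding simplex_set_def by auto
qed

lemma vertex_in_simplex_set:
  "w \<in> \<sigma> \<Longrightarrow> finite \<sigma> \<Longrightarrow> (\<lambda>v. if v = w then 1 else 0) \<in> simplex_set \<sigma>"
  unfolding simplex_set_def by (auto simp: sum.delta)

lemma realization_Delta:
  assumes "\<forall>X\<in>S. finite X"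
  shows "realization (Delta S) = \<Union> (simplex_set ` S)"
proof (intro equalityI subsetI)
  fix f assume "f \<in> realization (Delta S)"
  then obtain \<nu> X where X: "X \<in> S" "\<nu> \<subseteq> X" and "f \<in> simplex_set \<nu>"
    unfolding realization_def Delta_def simplex_set_def by blast
  then have "f \<in> simplex_set X" using simplex_set_mono[OF X(2)] assms by blast
  with X(1) show "f \<in> \<Union> (simplex_set ` S)" by blast
next
  fix f assume "f \<in> \<Union> (simplex_set ` S)"
  then obtain X where X: "X \<in> S" "f \<in> simplex_set X" by blast
  then have "X \<in> Delta S" unfolding Delta_def by blast
  then show "f \<in> realization (Delta S)"
    using X assms unfolding realization_def simplex_set_def by blast
qed

lemma contractible_simplex_set:
  assumes "finite \<sigma>" "w \<in> \<sigma>"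
  shows "contractible (simplex_set \<sigma>)"
proof -
  define e where "e = (\<lambda>v. if v = w then 1 else 0 :: real)"
  define h where "h z = (\<lambda>v. (1 - fst z) * snd z v + fst z * e v)" for z :: "real \<times> ('a \<Rightarrow> real)"
  have e: "e \<in> simplex_set \<sigma>" unfolding e_def using vertex_in_simplex_set[OF assms(2,1)] .
  have hin: "h (t, f) \<in> simplex_set \<sigma>" if "t \<in> {0..1}" "f \<in> simplex_set \<sigma>" for t f
  proof -
    have "sum (h (t, f)) \<sigma> = (1 - t) * sum f \<sigma> + t * sum e \<sigma>"
      unfolding h_def by (simp add: sum.distrib sum_distrib_left)
    then show ?thesis using that e unfolding simplex_set_def h_def by auto
  qed
  have "continuous_map (prod_topology (top_of_set {0..1}) (top_of_set (simplex_set \<sigma>))) euclidean h"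
    unfolding continuous_map_into_functions h_def
    by (intro allI continuous_intros continuous_map_fst_interval continuous_map_snd_coordinate)
  then have "continuous_map (prod_topology (top_of_set {0..1}) (top_of_set (simplex_set \<sigma>)))
      (top_of_set (simplex_set \<sigma>)) h"
    using hin unfolding continuous_map_in_subtopology by auto
  then have "homotopic_with (\<lambda>x. True) (top_of_set (simplex_set \<sigma>)) (top_of_set (simplex_set \<sigma>)) id (\<lambda>x. e)"
    by (subst homotopic_with) (auto intro!: exI[of _ h] simp: h_def)
  then show ?thesis unfolding contractible_def by blast
qed

lemma sum_transfer_mass:
  fixes f :: "'a \<Rightarrow> real"
  assumes "finite X" "K \<subseteq> X" "w \<in> X"
  shows "(\<Sum>v\<in>X. f v - a * (if v \<in> K then 1 else 0) + b * (if v = w then 1 else 0))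
       = sum f X - a * real (card K) + b"
proof -
  have "(\<Sum>v\<in>X. if v \<in> K then 1 else 0 :: real) = real (card K)"
    using assms(1,2) by (simp add: sum.If_cases Int_absorb1)
  then show ?thesis
    using assms(1,3) by (simp add: sum.distrib sum_subtractf sum_distrib_left[symmetric] sum.delta)
qed

definition push_mass :: "'a set \<Rightarrow> 'a \<Rightarrow> real \<times> ('a \<Rightarrow> real) \<Rightarrow> 'a \<Rightarrow> real" where
  "push_mass K w z = (\<lambda>v. snd z v - fst z * Min (snd z ` K) * (if v \<in> K then 1 else 0)
                          + fst z * Min (snd z ` K) * real (card K) * (if v = w then 1 else 0))"

lemma Min_coordinate_nonneg:
  assumes "f \<in> simplex_set X" "finite K" "K \<noteq> {}"
  shows "0 \<le> Min (f ` K)"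
  using assms by (subst Min_ge_iff) (auto simp: simplex_set_def)

lemma push_mass_in_simplex_set:
  assumes fX: "finite X" and K: "K \<subseteq> X" "K \<noteq> {}" and w: "w \<in> X" "w \<notin> K"
    and t: "t \<in> {0..1}" and f: "f \<in> simplex_set X"
  shows "push_mass K w (t, f) \<in> simplex_set X"
proof -
  have fK: "finite K" using K(1) fX finite_subset by blast
  let ?m = "Min (f ` K)"
  have tm: "t * ?m \<le> ?m" "0 \<le> t * ?m"
    using t Min_coordinate_nonneg[OF f fK K(2)] by (simp_all add: mult_left_le_one_le)
  have "0 \<le> push_mass K w (t, f) v" for v
  proof (cases "v \<in> K")
    case True
    then have "?m \<le> f v" using fK by simp
    with True show ?thesis unfolding push_mass_def using w(2) tm by auto
  next
    case False
    then show ?thesis unfolding push_mass_def using f tm unfolding simplex_set_def by auto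
  qed
  moreover have "push_mass K w (t, f) v = 0" if "v \<notin> X" for v
    using that K(1) w(1) f unfolding push_mass_def simplex_set_def by auto
  moreover have "sum (push_mass K w (t, f)) X = 1"
    using sum_transfer_mass[OF fX K(1) w(1), of f "t * ?m" "t * ?m * real (card K)"] f
    unfolding push_mass_def simplex_set_def by simp
  ultimately show ?thesis unfolding simplex_set_def by auto
qed

text \<open>Points of the simplices in \<open>S\<close> have a vanishing coordinate in \<open>K\<close>, so the push fixes
  them, and at time \<open>1\<close> a minimising coordinate \<open>k \<in> K\<close> is emptied, landing in
  \<open>X - {k} \<in> S\<close>.\<close>

lemma homotopy_equivalent_push_simplex:
  fixes X :: "'a set" and S :: "'a set set"
  assumes fX: "finite X" and fS: "finite S" "\<forall>Y\<in>S. finite Y"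
    and K: "K \<subseteq> X" "K \<noteq> {}" and w: "w \<in> X" "w \<notin> K"
    and faces: "\<And>k. k \<in> K \<Longrightarrow> X - {k} \<in> S" and misses: "\<And>Y. Y \<in> S \<Longrightarrow> \<exists>k\<in>K. k \<notin> Y"
  shows "top_of_set (simplex_set X \<union> \<Union> (simplex_set ` S))
           homotopy_equivalent_space top_of_set (\<Union> (simplex_set ` S))"
proof -
  have fK: "finite K" using K(1) fX finite_subset by blast
  let ?H = "push_mass K w"
  have Hin: "?H (t, f) \<in> simplex_set X" if "t \<in> {0..1}" "f \<in> simplex_set X" for t f
    using push_mass_in_simplex_set[OF fX K w that] .
  have Hfix: "?H (t, f) = f" if in_X: "f \<in> simplex_set X" and in_S: "f \<in> \<Union> (simplex_set ` S)" for t f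
  proof -
    obtain Y where "Y \<in> S" "f \<in> simplex_set Y" using in_S by blast
    moreover obtain k where "k \<in> K" "k \<notin> Y" using misses \<open>Y \<in> S\<close> by blast
    ultimately have "f k = 0" "Min (f ` K) \<le> f k" using fK unfolding simplex_set_def by auto
    then have "Min (f ` K) = 0" using Min_coordinate_nonneg[OF in_X fK K(2)] by simp
    then show ?thesis unfolding push_mass_def by simp
  qed
  have H1: "?H (1, f) \<in> \<Union> (simplex_set ` S)" if f: "f \<in> simplex_set X" for f
  proof -
    have "Min (f ` K) \<in> f ` K" using fK K(2) by simp
    then obtain k where k: "k \<in> K" "f k = Min (f ` K)" by auto
    then have Hk: "?H (1, f) k = 0" unfolding push_mass_def using w(2) by auto
    have inX: "?H (1, f) \<in> simplex_set X" using Hin[of 1 f] f by simp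
    have "k \<in> X" using k(1) K(1) by blast
    then have "sum (?H (1, f)) (X - {k}) = sum (?H (1, f)) X - ?H (1, f) k"
      using fX by (simp add: sum_diff1)
    then have "?H (1, f) \<in> simplex_set (X - {k})" using inX Hk unfolding simplex_set_def by auto
    moreover have "X - {k} \<in> S" using faces[OF k(1)] .
    ultimately show ?thesis by blast
  qed
  have cont: "continuous_map (prod_topology (top_of_set {0..1}) (top_of_set (simplex_set X)))
      euclideanreal (\<lambda>z. ?H z v)" for v
  proof -
    have "continuous_map (prod_topology (top_of_set {0..1::real}) (top_of_set (simplex_set X)))
        euclideanreal (\<lambda>z. Min ((\<lambda>k. snd z k) ` K))"
      using fK K(2) by (rule continuous_map_Min) (rule continuous_map_snd_coordinate)
    then show ?thesis unfolding push_mass_def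
      by (intro continuous_intros continuous_map_fst_interval continuous_map_snd_coordinate)
  qed
  have "closed (\<Union> (simplex_set ` S))" using fS by (intro closed_Union) (auto intro: closed_simplex_set)
  then show ?thesis
  proof (rule homotopy_equivalent_deformation[OF closed_simplex_set[OF fX] _ cont])
    show "?H (0, f) = f" for f unfolding push_mass_def by simp
    show "?H (t, f) \<in> simplex_set X \<union> \<Union> (simplex_set ` S)" if "t \<in> {0..1}" "f \<in> simplex_set X" for t f
      using Hin[OF that] by blast
  qed (use H1 Hfix in auto)
qed

text \<open>An earlier neighbour separating \<open>Y\<close> from \<open>X\<close> cannot be a coface of \<open>X\<close>, so it is a facet
  \<open>X - {k}\<close>; and \<open>K \<noteq> X\<close>, since otherwise the subcube below \<open>X\<close> would put \<open>{}\<close> into \<open>S\<close>.\<close>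

lemma last_simplex_earlier_facets:
  assumes S: "shelling_order S pos" and ne: "{} \<notin> S" and X: "X \<in> S" "finite X"
    and last: "\<forall>Y\<in>S. pos Y \<le> pos X" and no_coface: "\<And>k. k \<notin> X \<Longrightarrow> insert k X \<notin> S - {X}"
  defines "K \<equiv> {k\<in>X. X - {k} \<in> S - {X}}"
  shows "\<And>Y. Y \<in> S - {X} \<Longrightarrow> \<exists>k\<in>K. k \<notin> Y" and "K \<noteq> X"
proof -
  fix Y assume Y: "Y \<in> S - {X}"
  obtain k where k: "k \<in> flip Y X" "flip {k} X \<in> S" "pos (flip {k} X) < pos X"
    using shelling_orderD[OF S X(1) _ earlier_than_last[OF S X(1) last Y]] Y by blast
  then have k': "flip {k} X \<in> S - {X}" by simp
  then have "k \<in> X" using no_coface flip_singleton_not_mem by metis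
  then have "k \<in> K" "k \<notin> Y" using k(1) k' unfolding K_def flip_def by auto
  then show "\<exists>k\<in>K. k \<notin> Y" by blast
next
  show "K \<noteq> X"
  proof
    assume KX: "K = X"
    let ?slice = "{Y\<in>S. Y \<inter> - X = X \<inter> - X}"
    have D: "\<forall>Y\<in>?slice. \<forall>Z\<in>?slice. flip Y Z \<subseteq> X"
    proof (intro ballI)
      fix Y Z assume "Y \<in> ?slice" "Z \<in> ?slice"
      then show "flip Y Z \<subseteq> X" using flip_subset_if_agree[of Y "- X" X Z] by simp
    qed
    have "restriction X ?slice pos X = X"
    proof (intro equalityI subsetI)
      fix k assume "k \<in> X"
      then have "X - {k} \<in> S - {X}" using KX unfolding K_def by blast
      with earlier_than_last[OF S X(1) last this] \<open>k \<in> X\<close> show "k \<in> restriction X ?slice pos X"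
        unfolding restriction_def by (auto simp: flip_singleton_mem)
    qed (simp add: restriction_def)
    from subcube_if_full_restriction[OF X(2) shelling_order_agree_on[OF S] D _ this, of X]
    have "flip X X \<in> S" using X by simp
    with ne show False by simp
  qed
qed

text \<open>Remove the last simplex: it is either a face of an earlier simplex or can be pushed onto the
  earlier ones.\<close>

lemma contractible_union_simplices:
  assumes "finite S" "shelling_order S pos" "{} \<notin> S" "S \<noteq> {}" "\<forall>X\<in>S. finite X"
  shows "contractible (\<Union> (simplex_set ` S))"
  using assms
proof (induction "card S" arbitrary: S rule: less_induct)
  case (less S)
  note fS = less.prems(1) and S = less.prems(2) and ne = less.prems(3) and Sne = less.prems(4)
    and fin = less.prems(5)
  obtain X where X: "X \<in> S" and last: "\<forall>Y\<in>S. pos Y \<le> pos X" using exists_last[OF fS Sne] by blast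
  have fX: "finite X" and "X \<noteq> {}" using fin ne X by auto
  then obtain w0 where "w0 \<in> X" by blast
  have US: "\<Union> (simplex_set ` S) = simplex_set X \<union> \<Union> (simplex_set ` (S - {X}))"
    using X by blast
  show ?case
  proof (cases "S - {X} = {}")
    case True
    show ?thesis using contractible_simplex_set[OF fX \<open>w0 \<in> X\<close>] unfolding US True by simp
  next
    case False
    have "card (S - {X}) < card S" using card_Diff1_less[OF fS X] .
    then have IH: "contractible (\<Union> (simplex_set ` (S - {X})))"
      using less.hyps False fS ne fin shelling_order_Diff_last[OF S last] by auto
    consider (absorbed) k where "k \<notin> X" "insert k X \<in> S - {X}"
      | (pushed) "\<And>k. k \<notin> X \<Longrightarrow> insert k X \<notin> S - {X}"
      by blast
    then show ?thesis
    proof cases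
      case absorbed
      then have "simplex_set X \<subseteq> simplex_set (insert k X)" using fX by (intro simplex_set_mono) auto
      then have "\<Union> (simplex_set ` S) = \<Union> (simplex_set ` (S - {X}))" using US absorbed(2) by blast
      then show ?thesis using IH by simp
    next
      case pushed
      define K where "K = {k\<in>X. X - {k} \<in> S - {X}}"
      have misses: "\<exists>k\<in>K. k \<notin> Y" if "Y \<in> S - {X}" for Y
        using last_simplex_earlier_facets(1)[OF S ne X fX last pushed that] unfolding K_def .
      have "K \<noteq> X" using last_simplex_earlier_facets(2)[OF S ne X fX last pushed] unfolding K_def .
      then obtain w where w: "w \<in> X" "w \<notin> K" unfolding K_def by blast
      have "K \<noteq> {}" using misses False by blast
      have "K \<subseteq> X" and faces: "\<And>k. k \<in> K \<Longrightarrow> X - {k} \<in> S - {X}" unfolding K_def by auto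
      have "finite (S - {X})" "\<forall>Y\<in>S - {X}. finite Y" using fS fin by auto
      from homotopy_equivalent_push_simplex[OF fX this \<open>K \<subseteq> X\<close> \<open>K \<noteq> {}\<close> w faces misses]
      have "top_of_set (simplex_set X \<union> \<Union> (simplex_set ` (S - {X})))
          homotopy_equivalent_space top_of_set (\<Union> (simplex_set ` (S - {X})))" .
      then show ?thesis
        using IH US homotopy_equivalent_space_contractibility contractible_space_top_of_set by metis
    qed
  qed
qed

lemma link_Delta:
  "link \<tau> (Delta S) = Delta ((\<lambda>Y. Y - \<tau>) ` {Y\<in>S. \<tau> \<subseteq> Y})"
proof (intro equalityI subsetI)
  fix \<nu> assume "\<nu> \<in> link \<tau> (Delta S)"
  then obtain Y where Y: "Y \<in> S" "\<nu> \<union> \<tau> \<subseteq> Y" "\<nu> \<inter> \<tau> = {}" unfolding link_def Delta_def by blast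
  then have "Y - \<tau> \<in> (\<lambda>Y. Y - \<tau>) ` {Y\<in>S. \<tau> \<subseteq> Y}" by auto
  moreover have "\<nu> \<subseteq> Y - \<tau>" using Y(2,3) by blast
  ultimately show "\<nu> \<in> Delta ((\<lambda>Y. Y - \<tau>) ` {Y\<in>S. \<tau> \<subseteq> Y})" unfolding Delta_def by blast
next
  fix \<nu> assume "\<nu> \<in> Delta ((\<lambda>Y. Y - \<tau>) ` {Y\<in>S. \<tau> \<subseteq> Y})"
  then obtain Y where Y: "Y \<in> S" "\<tau> \<subseteq> Y" "\<nu> \<subseteq> Y - \<tau>" unfolding Delta_def by blast
  then have "\<nu> \<in> Delta S" "\<nu> \<union> \<tau> \<in> Delta S" unfolding Delta_def by blast+
  with Y(3) show "\<nu> \<in> link \<tau> (Delta S)" unfolding link_def by blast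
qed

lemma no_weak_bitflip_obstruction:
  assumes code: "is_code n C" and S: "shelling_order C pos"
  shows "\<not> weak_bitflip_obstruction n C g \<tau>"
proof
  assume "weak_bitflip_obstruction n C g \<tau>"
  then have g: "g \<subseteq> ground n" and "\<tau> \<in> Delta (act g C)" and "\<tau> \<notin> act g C"
    and nc: "\<not> contractible_cx (link \<tau> (Delta (act g C)))"
    unfolding weak_bitflip_obstruction_def by auto
  define L where "L = (\<lambda>Y. Y - \<tau>) ` {Y\<in>act g C. \<tau> \<subseteq> Y}"
  have SL: "shelling_order L (\<lambda>Z. pos (flip g (Z \<union> \<tau>)))"
    unfolding L_def using shelling_order_link[OF shelling_order_act[OF S]] .
  have "finite L" unfolding L_def act_def using finite_code[OF code] by simp
  have fin: "\<forall>Z\<in>L. finite Z"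
  proof
    fix Z assume "Z \<in> L"
    then obtain X where "X \<in> C" "Z = flip g X - \<tau>" unfolding L_def act_def by auto
    moreover have "flip g X \<subseteq> ground n" using code_subset_ground[OF code \<open>X \<in> C\<close>] g unfolding flip_def by auto
    ultimately show "finite Z" using finite_subset by fastforce
  qed
  have "{} \<notin> L" using \<open>\<tau> \<notin> act g C\<close> unfolding L_def by auto
  moreover have "L \<noteq> {}" using \<open>\<tau> \<in> Delta (act g C)\<close> unfolding L_def Delta_def by auto
  ultimately have contr: "contractible (\<Union> (simplex_set ` L))"
    using contractible_union_simplices[OF \<open>finite L\<close> SL _ _ fin] by simp
  obtain Z where Z: "Z \<in> L" using \<open>L \<noteq> {}\<close> by blast
  then have "Z \<noteq> {}" using \<open>{} \<notin> L\<close> by blast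
  then obtain w where "w \<in> Z" by auto
  moreover have "finite Z" using fin Z by blast
  ultimately have "(\<lambda>v. if v = w then 1 else 0) \<in> simplex_set Z"
    by (rule vertex_in_simplex_set)
  with Z have "\<Union> (simplex_set ` L) \<noteq> {}" by blast
  with contr have "contractible_cx (Delta L)"
    unfolding contractible_cx_def realization_Delta[OF fin] by blast
  with nc show False unfolding link_Delta L_def by simp
qed

theorem theoremE:
  fixes n :: nat and C :: "nat set set"
  assumes "is_code n C"
    and "shellable (polar n C)"
  shows "(\<nexists>g \<tau>. weak_bitflip_obstruction n C g \<tau>)
       \<and> (\<nexists>F. sphere_link_obstruction n C F)
       \<and> (\<nexists>\<sigma>. chamber_obstruction n C \<sigma>)"
proof -
  obtain pos where "shelling_order C pos"
    using shellable_polar_imp_shelling_order[OF assms] .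
  then show ?thesis
    using no_weak_bitflip_obstruction no_sphere_link_obstruction no_chamber_obstruction assms(1)
    by blast
qed

end
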